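(* Let $M^{\circ}$ be a deterministic abstract simulator, and let $\mathbf{M}^{\star}=\langle M^{\star},\mathcal{X},q^{\star}\rangle$ be a target block MDP whose latent transitions and rewards form an $\eta$-perturbation of $M^{\circ}$ for some $\eta<1/2$, and whose initial latent state $s_1$ satisfies $\Pr(s_1\ne s_{\text{init}})=\epsilon_0$. Let $\mathcal{F}\subseteq\{\mathcal{X}^2\to\Delta(\mathcal{A})\}$ be a finite function class satisfying realizability with respect to $\mathbf{M}^{\star}$. Then for any $\epsilon>0$ and $\delta\in(0,1)$, TASID with oracle access to $\mathbf{M}^{\star}$, optimization-oracle access to $\mathcal{F}$ and inputs $M^{\circ},\eta,\epsilon,\delta$ (with an appropriate per-step sample size $n_D$) executes \[ n=O\!\left(\frac{H^4|\mathcal{A}|^3\ln(|\mathcal{F}|/\delta)}{\epsilon(1-2\eta)^2}\right) \] episodes and returns a practicable policy $\pi$ which, with probability at least $1-\delta$, satisfies $V^{\pi}_{\mathbf{M}^{\star}}\ge V^{\rho\circ\phi^{\star}}_{\mathbf{M}^{\star}}-\epsilon-H\epsilon_0$, where $\rho$ is the robust abstract policy returned by $\mathrm{RDP}(M^{\circ},\eta)$.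
   Context: Episodic MDP $M=\langle\mathcal{S},\mathcal{A},s_{\text{init}},H,T,R\rangle$: finite $\mathcal{S},\mathcal{A}$, initial state $s_{\text{init}}$, horizon $H$, $T_h(\cdot\mid s,a)\in\Delta(\mathcal{S})$, $R_h(s,a)\in[0,1]$. The abstract simulator $M^{\circ}=\langle\mathcal{S},\mathcal{A},s_{\text{init}},H,T^{\circ},R^{\circ}\rangle$ is deterministic: $T^{\circ}_h(s'\mid s,a)\in\{0,1\}$. Block MDP $\mathbf{M}^{\star}=\langle M^{\star},\mathcal{X},q^{\star}\rangle$ with latent MDP $M^{\star}$ (states $\mathcal{S}$, actions $\mathcal{A}$, horizon $H$, transitions $T^{\star}$, rewards $R^{\star}$), observation space $\mathcal{X}$, emission $q^{\star}:\mathcal{S}\to\Delta(\mathcal{X})$ with disjoint supports, hence a perfect decoder $\phi^{\star}:\mathcal{X}\to\mathcal{S}$. Episode: $s_1$ drawn as stated; at step $h$ observe $x_h\sim q^{\star}(\cdot\mid s_h)$, take $a_h$, receive $r_h=R^{\star}_h(s_h,a_h)$, $s_{h+1}\sim T^{\star}_h(\cdot\mid s_h,a_h)$; latent states unobserved. Observation-level transition $\mathbf{T}^{\star}_h(x'\mid x,a)=q^{\star}(x'\mid\phi^{\star}(x'))T^{\star}_h(\phi^{\star}(x')\mid\phi^{\star}(x),a)$. $\eta$-perturbation: there is $\xi:[H]\times\mathcal{S}\times\mathcal{A}\to\Delta(\mathcal{A})$ with $\xi_h(a\mid s,a)\ge1-\eta$ and $T^{\star}_h(s'\mid s,a)=\sum_{a'}T^{\circ}_h(s'\mid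 s,a')\xi_h(a'\mid s,a)$, $R^{\star}_h(s,a)=\sum_{a'}R^{\circ}_h(s,a')\xi_h(a'\mid s,a)$. Realizability: for every $h$ there is $f^{\star}_h\in\mathcal{F}$ with $f^{\star}_h(a\mid x,x')=\mathbf{T}^{\star}_h(x'\mid x,a)/\sum_{a'}\mathbf{T}^{\star}_h(x'\mid x,a')$ for all $x,x'$ that can occur at steps $h,h+1$. Practicable policy: $\pi_h(x_{1:h})\in\mathcal{A}$, value $V^{\pi}_{\mathbf{M}^{\star}}=\mathbb{E}[r_1+\dots+r_H]$; $\rho\circ\phi^{\star}$ is the practicable policy $x_h\mapsto\rho_h(\phi^{\star}(x_h))$. $\mathrm{RDP}(M^{\circ},\eta)$: $\tilde V_{H+1}\equiv0$; for $h=H,\dots,1$: $\tilde Q_h(s,a)=R^{\circ}_h(s,a)+\sum_{s'}T^{\circ}_h(s'\mid s,a)\tilde V_{h+1}(s')$, $\tilde V_h(s)=(1-\eta)\max_a\tilde Q_h(s,a)+\eta\min_a\tilde Q_h(s,a)$; return $\rho_h(s)\in\arg\max_a\tilde Q_h(s,a)$. TASID with per-step sample size $n_D$: $\rho=\mathrm{RDP}(M^{\circ},\eta)$; $\pi_1(x)=\rho_1(s_{\text{init}})$. For $h=1,\dots,H-1$: collect $n_D$ triples $(x_h,a_h,x_{h+1})$, each from a fresh episode following $\pi_1,\dots,\pi_{h-1}$ for $h-1$ steps, then a uniformly random $a_h$; $f_h\in\arg\max_{f\in\mathcal{F}}\sum\ln f(a_h\mid x_h,x_{h+1})$; $\alpha_h(x,x')=\arg\max_a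 f_h(a\mid x,x')$; $\phi_{h+1}(x_{1:h+1})$ is the state reached in $M^{\circ}$ from $s_{\text{init}}$ via actions $\alpha_1(x_1,x_2),\dots,\alpha_h(x_h,x_{h+1})$; $\pi_{h+1}(x_{1:h+1})=\rho_{h+1}(\phi_{h+1}(x_{1:h+1}))$. Return $\pi=(\pi_1,\dots,\pi_H)$. *)

theory Defs
  imports "HOL-Probability.Probability"
begin

text \<open>
Steps are indexed h = 1..H.  The latent state space is a finite carrier
set S (of an arbitrary type 's), the action space a finite nonempty carrier set A.
The deterministic abstract simulator is given by its successor function Tc h s a
(so T-circ_h(s'|s,a) = 1 iff s' = Tc h s a) and its reward Rc h s a.
A practicable (deterministic, history dependent) policy is pi :: nat => 'x list => 'a,
pi h [x_1,...,x_h] being the action at step h.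
\<close>

definition det_simulator ::
  "nat \<Rightarrow> 's set \<Rightarrow> 'a set \<Rightarrow> 's \<Rightarrow> (nat \<Rightarrow> 's \<Rightarrow> 'a \<Rightarrow> 's) \<Rightarrow> (nat \<Rightarrow> 's \<Rightarrow> 'a \<Rightarrow> real) \<Rightarrow> bool" where
  "det_simulator H S A sinit Tc Rc \<longleftrightarrow>
     finite S \<and> finite A \<and> A \<noteq> {} \<and> sinit \<in> S \<and>
     (\<forall>h\<in>{1..H}. \<forall>s\<in>S. \<forall>a\<in>A. Tc h s a \<in> S \<and> 0 \<le> Rc h s a \<and> Rc h s a \<le> 1)"

definition block_mdp ::
  "nat \<Rightarrow> 's set \<Rightarrow> 'a set \<Rightarrow> 's pmf \<Rightarrow> (nat \<Rightarrow> 's \<Rightarrow> 'a \<Rightarrow> 's pmf) \<Rightarrow> (nat \<Rightarrow> 's \<Rightarrow> 'a \<Rightarrow> real)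
   \<Rightarrow> ('s \<Rightarrow> 'x pmf) \<Rightarrow> bool" where
  "block_mdp H S A init T R q \<longleftrightarrow>
     set_pmf init \<subseteq> S \<and>
     (\<forall>h\<in>{1..H}. \<forall>s\<in>S. \<forall>a\<in>A. set_pmf (T h s a) \<subseteq> S \<and> 0 \<le> R h s a \<and> R h s a \<le> 1) \<and>
     (\<forall>s\<in>S. \<forall>s'\<in>S. s \<noteq> s' \<longrightarrow> set_pmf (q s) \<inter> set_pmf (q s') = {})"

definition eta_perturbation ::
  "nat \<Rightarrow> 's set \<Rightarrow> 'a set \<Rightarrow> (nat \<Rightarrow> 's \<Rightarrow> 'a \<Rightarrow> 's) \<Rightarrow> (nat \<Rightarrow> 's \<Rightarrow> 'a \<Rightarrow> real)
   \<Rightarrow> (nat \<Rightarrow> 's \<Rightarrow> 'a \<Rightarrow> 's pmf) \<Rightarrow> (nat \<Rightarrow> 's \<Rightarrow> 'a \<Rightarrow> real) \<Rightarrow> real \<Rightarrow> bool" where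
  "eta_perturbation H S A Tc Rc T R \<eta> \<longleftrightarrow>
     (\<exists>\<xi> :: nat \<Rightarrow> 's \<Rightarrow> 'a \<Rightarrow> 'a pmf.
        \<forall>h\<in>{1..H}. \<forall>s\<in>S. \<forall>a\<in>A.
          set_pmf (\<xi> h s a) \<subseteq> A \<and> pmf (\<xi> h s a) a \<ge> 1 - \<eta> \<and>
          (\<forall>s'. pmf (T h s a) s' = (\<Sum>a'\<in>A. (if Tc h s a' = s' then 1 else 0) * pmf (\<xi> h s a) a')) \<and>
          R h s a = (\<Sum>a'\<in>A. Rc h s a' * pmf (\<xi> h s a) a'))"

text \<open>The perfect decoder phi-star (well defined by disjointness of emission supports).\<close>
definition decoder :: "'s set \<Rightarrow> ('s \<Rightarrow> 'x pmf) \<Rightarrow> 'x \<Rightarrow> 's" where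
  "decoder S q x = (THE s. s \<in> S \<and> x \<in> set_pmf (q s))"

definition obs_trans ::
  "'s set \<Rightarrow> (nat \<Rightarrow> 's \<Rightarrow> 'a \<Rightarrow> 's pmf) \<Rightarrow> ('s \<Rightarrow> 'x pmf) \<Rightarrow> nat \<Rightarrow> 'x \<Rightarrow> 'a \<Rightarrow> 'x \<Rightarrow> real" where
  "obs_trans S T q h x a x' =
     pmf (q (decoder S q x')) x' * pmf (T h (decoder S q x) a) (decoder S q x')"

fun reach :: "'a set \<Rightarrow> 's pmf \<Rightarrow> (nat \<Rightarrow> 's \<Rightarrow> 'a \<Rightarrow> 's pmf) \<Rightarrow> nat \<Rightarrow> 's set" where
  "reach A init T 0 = {}"
| "reach A init T (Suc 0) = set_pmf init"
| "reach A init T (Suc (Suc h)) = (\<Union>s\<in>reach A init T (Suc h). \<Union>a\<in>A. set_pmf (T (Suc h) s a))"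

definition obs_occurs ::
  "'a set \<Rightarrow> 's pmf \<Rightarrow> (nat \<Rightarrow> 's \<Rightarrow> 'a \<Rightarrow> 's pmf) \<Rightarrow> ('s \<Rightarrow> 'x pmf) \<Rightarrow> nat \<Rightarrow> 'x \<Rightarrow> bool" where
  "obs_occurs A init T q h x \<longleftrightarrow> (\<exists>s\<in>reach A init T h. x \<in> set_pmf (q s))"

definition realizable ::
  "nat \<Rightarrow> 's set \<Rightarrow> 'a set \<Rightarrow> 's pmf \<Rightarrow> (nat \<Rightarrow> 's \<Rightarrow> 'a \<Rightarrow> 's pmf) \<Rightarrow> ('s \<Rightarrow> 'x pmf)
   \<Rightarrow> ('x \<Rightarrow> 'x \<Rightarrow> 'a pmf) set \<Rightarrow> bool" where
  "realizable H S A init T q F \<longleftrightarrow>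
     (\<forall>h\<in>{1..<H}. \<exists>f\<in>F. \<forall>x x'.
        obs_occurs A init T q h x \<and> (\<Sum>a'\<in>A. obs_trans S T q h x a' x') > 0 \<longrightarrow>
        (\<forall>a\<in>A. pmf (f x x') a = obs_trans S T q h x a x' / (\<Sum>a'\<in>A. obs_trans S T q h x a' x')))"

text \<open>Value of a practicable policy. vtail k h xs s: expected reward of the remaining
k steps starting at step h in latent state s, with past observations xs.\<close>
fun vtail ::
  "(nat \<Rightarrow> 's \<Rightarrow> 'a \<Rightarrow> 's pmf) \<Rightarrow> (nat \<Rightarrow> 's \<Rightarrow> 'a \<Rightarrow> real) \<Rightarrow> ('s \<Rightarrow> 'x pmf) \<Rightarrow> (nat \<Rightarrow> 'x list \<Rightarrow> 'a)
   \<Rightarrow> nat \<Rightarrow> nat \<Rightarrow> 'x list \<Rightarrow> 's \<Rightarrow> real" where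
  "vtail T R q \<pi> 0 h xs s = 0"
| "vtail T R q \<pi> (Suc k) h xs s =
     measure_pmf.expectation (q s) (\<lambda>x.
       R h s (\<pi> h (xs @ [x])) +
       measure_pmf.expectation (T h s (\<pi> h (xs @ [x]))) (\<lambda>s'. vtail T R q \<pi> k (Suc h) (xs @ [x]) s'))"

definition policy_value ::
  "nat \<Rightarrow> 's pmf \<Rightarrow> (nat \<Rightarrow> 's \<Rightarrow> 'a \<Rightarrow> 's pmf) \<Rightarrow> (nat \<Rightarrow> 's \<Rightarrow> 'a \<Rightarrow> real) \<Rightarrow> ('s \<Rightarrow> 'x pmf)
   \<Rightarrow> (nat \<Rightarrow> 'x list \<Rightarrow> 'a) \<Rightarrow> real" where
  "policy_value H init T R q \<pi> = measure_pmf.expectation init (\<lambda>s. vtail T R q \<pi> H 1 [] s)"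

definition compose_decoder :: "'s set \<Rightarrow> ('s \<Rightarrow> 'x pmf) \<Rightarrow> (nat \<Rightarrow> 's \<Rightarrow> 'a) \<Rightarrow> nat \<Rightarrow> 'x list \<Rightarrow> 'a" where
  "compose_decoder S q \<rho> h xs = \<rho> h (decoder S q (last xs))"

text \<open>Robust dynamic programming RDP(M-circ, eta). rdpV k h s is V-tilde_h(s) where k = H+1-h.\<close>
fun rdpV ::
  "'a set \<Rightarrow> (nat \<Rightarrow> 's \<Rightarrow> 'a \<Rightarrow> 's) \<Rightarrow> (nat \<Rightarrow> 's \<Rightarrow> 'a \<Rightarrow> real) \<Rightarrow> real \<Rightarrow> nat \<Rightarrow> nat \<Rightarrow> 's \<Rightarrow> real" where
  "rdpV A Tc Rc \<eta> 0 h s = 0"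
| "rdpV A Tc Rc \<eta> (Suc k) h s =
     (1 - \<eta>) * (MAX a\<in>A. Rc h s a + rdpV A Tc Rc \<eta> k (Suc h) (Tc h s a)) +
     \<eta> * (MIN a\<in>A. Rc h s a + rdpV A Tc Rc \<eta> k (Suc h) (Tc h s a))"

definition rdpQ ::
  "nat \<Rightarrow> 'a set \<Rightarrow> (nat \<Rightarrow> 's \<Rightarrow> 'a \<Rightarrow> 's) \<Rightarrow> (nat \<Rightarrow> 's \<Rightarrow> 'a \<Rightarrow> real) \<Rightarrow> real \<Rightarrow> nat \<Rightarrow> 's \<Rightarrow> 'a \<Rightarrow> real" where
  "rdpQ H A Tc Rc \<eta> h s a = Rc h s a + rdpV A Tc Rc \<eta> (H - h) (Suc h) (Tc h s a)"

text \<open>rho is a possible output of RDP(M-circ, eta) (any tie breaking of the argmax).\<close>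
definition rdp_output ::
  "nat \<Rightarrow> 's set \<Rightarrow> 'a set \<Rightarrow> (nat \<Rightarrow> 's \<Rightarrow> 'a \<Rightarrow> 's) \<Rightarrow> (nat \<Rightarrow> 's \<Rightarrow> 'a \<Rightarrow> real) \<Rightarrow> real
   \<Rightarrow> (nat \<Rightarrow> 's \<Rightarrow> 'a) \<Rightarrow> bool" where
  "rdp_output H S A Tc Rc \<eta> \<rho> \<longleftrightarrow>
     (\<forall>h\<in>{1..H}. \<forall>s\<in>S. \<rho> h s \<in> A \<and> (\<forall>a\<in>A. rdpQ H A Tc Rc \<eta> h s a \<le> rdpQ H A Tc Rc \<eta> h s (\<rho> h s)))"

text \<open>TASID.  dec h s [alpha_h, ...] [x_h, x_{h+1}, ...] runs the simulator from state s at
step h along the decoded actions alpha_h(x_h,x_{h+1}), ...; it stops when the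
observations (or the learned alphas) run out.\<close>
fun dec :: "(nat \<Rightarrow> 's \<Rightarrow> 'a \<Rightarrow> 's) \<Rightarrow> nat \<Rightarrow> 's \<Rightarrow> ('x \<Rightarrow> 'x \<Rightarrow> 'a) list \<Rightarrow> 'x list \<Rightarrow> 's" where
  "dec Tc h s (\<alpha> # \<alpha>s) (x # x' # xs) = dec Tc (Suc h) (Tc h s (\<alpha> x x')) \<alpha>s (x' # xs)"
| "dec Tc h s _ _ = s"

definition tasid_policy ::
  "(nat \<Rightarrow> 's \<Rightarrow> 'a \<Rightarrow> 's) \<Rightarrow> 's \<Rightarrow> (nat \<Rightarrow> 's \<Rightarrow> 'a) \<Rightarrow> ('x \<Rightarrow> 'x \<Rightarrow> 'a) list \<Rightarrow> nat \<Rightarrow> 'x list \<Rightarrow> 'a" where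
  "tasid_policy Tc sinit \<rho> \<alpha>s h xs = \<rho> h (dec Tc 1 sinit \<alpha>s xs)"

text \<open>roll k: joint law of (s_{k+1}, x_{1:k}) after following pi for k steps in the target.\<close>
fun roll ::
  "'s pmf \<Rightarrow> (nat \<Rightarrow> 's \<Rightarrow> 'a \<Rightarrow> 's pmf) \<Rightarrow> ('s \<Rightarrow> 'x pmf) \<Rightarrow> (nat \<Rightarrow> 'x list \<Rightarrow> 'a) \<Rightarrow> nat \<Rightarrow> ('s \<times> 'x list) pmf" where
  "roll init T q \<pi> 0 = map_pmf (\<lambda>s. (s, [])) init"
| "roll init T q \<pi> (Suc k) =
     bind_pmf (roll init T q \<pi> k) (\<lambda>(s, xs).
       bind_pmf (q s) (\<lambda>x.
         map_pmf (\<lambda>s'. (s', xs @ [x])) (T (Suc k) s (\<pi> (Suc k) (xs @ [x])))))"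

definition sample_triple ::
  "'a set \<Rightarrow> 's pmf \<Rightarrow> (nat \<Rightarrow> 's \<Rightarrow> 'a \<Rightarrow> 's pmf) \<Rightarrow> ('s \<Rightarrow> 'x pmf) \<Rightarrow> (nat \<Rightarrow> 'x list \<Rightarrow> 'a) \<Rightarrow> nat
   \<Rightarrow> ('x \<times> 'a \<times> 'x) pmf" where
  "sample_triple A init T q \<pi> h =
     bind_pmf (roll init T q \<pi> (h - 1)) (\<lambda>(s, xs).
       bind_pmf (q s) (\<lambda>x.
         bind_pmf (pmf_of_set A) (\<lambda>a.
           bind_pmf (T h s a) (\<lambda>s'.
             map_pmf (\<lambda>x'. (x, a, x')) (q s')))))"

fun iid :: "nat \<Rightarrow> 'b pmf \<Rightarrow> 'b list pmf" where
  "iid 0 p = return_pmf []"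
| "iid (Suc n) p = bind_pmf p (\<lambda>z. map_pmf (\<lambda>zs. z # zs) (iid n p))"

text \<open>Likelihood of a data set under f (maximizing it is maximizing the log-likelihood).\<close>
definition likelihood :: "('x \<Rightarrow> 'x \<Rightarrow> 'a pmf) \<Rightarrow> ('x \<times> 'a \<times> 'x) list \<Rightarrow> real" where
  "likelihood f D = prod_list (map (\<lambda>(x, a, x'). pmf (f x x') a) D)"

definition mle_oracle ::
  "nat \<Rightarrow> ('x \<Rightarrow> 'x \<Rightarrow> 'a pmf) set \<Rightarrow> (nat \<Rightarrow> ('x \<times> 'a \<times> 'x) list \<Rightarrow> ('x \<Rightarrow> 'x \<Rightarrow> 'a pmf)) \<Rightarrow> bool" where
  "mle_oracle H F oracle \<longleftrightarrow>
     (\<forall>h\<in>{1..<H}. \<forall>D. oracle h D \<in> F \<and> (\<forall>g\<in>F. likelihood g D \<le> likelihood (oracle h D) D))"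

definition argmax_selector :: "'a set \<Rightarrow> (('a \<Rightarrow> real) \<Rightarrow> 'a) \<Rightarrow> bool" where
  "argmax_selector A sel \<longleftrightarrow> (\<forall>g. sel g \<in> A \<and> (\<forall>a\<in>A. g a \<le> g (sel g)))"

fun tasid_stage ::
  "'a set \<Rightarrow> 's pmf \<Rightarrow> (nat \<Rightarrow> 's \<Rightarrow> 'a \<Rightarrow> 's pmf) \<Rightarrow> ('s \<Rightarrow> 'x pmf) \<Rightarrow> (nat \<Rightarrow> 's \<Rightarrow> 'a \<Rightarrow> 's) \<Rightarrow> 's
   \<Rightarrow> (nat \<Rightarrow> 's \<Rightarrow> 'a) \<Rightarrow> (nat \<Rightarrow> ('x \<times> 'a \<times> 'x) list \<Rightarrow> ('x \<Rightarrow> 'x \<Rightarrow> 'a pmf)) \<Rightarrow> (('a \<Rightarrow> real) \<Rightarrow> 'a)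
   \<Rightarrow> nat \<Rightarrow> nat \<Rightarrow> ('x \<Rightarrow> 'x \<Rightarrow> 'a) list pmf" where
  "tasid_stage A init T q Tc sinit \<rho> oracle sel nD 0 = return_pmf []"
| "tasid_stage A init T q Tc sinit \<rho> oracle sel nD (Suc h) =
     bind_pmf (tasid_stage A init T q Tc sinit \<rho> oracle sel nD h) (\<lambda>\<alpha>s.
       map_pmf (\<lambda>D. \<alpha>s @ [\<lambda>x x'. sel (\<lambda>a. pmf (oracle (Suc h) D x x') a)])
         (iid nD (sample_triple A init T q (tasid_policy Tc sinit \<rho> \<alpha>s) (Suc h))))"

text \<open>Law of the practicable policy returned by TASID (uses (H-1)*nD episodes).\<close>
definition tasid ::
  "nat \<Rightarrow> 'a set \<Rightarrow> 's pmf \<Rightarrow> (nat \<Rightarrow> 's \<Rightarrow> 'a \<Rightarrow> 's pmf) \<Rightarrow> ('s \<Rightarrow> 'x pmf) \<Rightarrow> (nat \<Rightarrow> 's \<Rightarrow> 'a \<Rightarrow> 's) \<Rightarrow> 's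
   \<Rightarrow> (nat \<Rightarrow> 's \<Rightarrow> 'a) \<Rightarrow> (nat \<Rightarrow> ('x \<times> 'a \<times> 'x) list \<Rightarrow> ('x \<Rightarrow> 'x \<Rightarrow> 'a pmf)) \<Rightarrow> (('a \<Rightarrow> real) \<Rightarrow> 'a)
   \<Rightarrow> nat \<Rightarrow> (nat \<Rightarrow> 'x list \<Rightarrow> 'a) pmf" where
  "tasid H A init T q Tc sinit \<rho> oracle sel nD =
     map_pmf (tasid_policy Tc sinit \<rho>) (tasid_stage A init T q Tc sinit \<rho> oracle sel nD (H - 1))"

end

theory Submission
  imports Defs
begin

text \<open>
  As long as every transition of a trajectory has been decoded correctly, the decoded latent state
  is the true one and the learned policy plays \<rho> exactly like the latent policy, so value is lost
  only on trajectories that start away from s_init (at most H \<epsilon>0) or at a decoding mistake (at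
  most H - 1 per mistake). A mistake under the learned policy is at most |A| times as likely as
  under the uniformly random action used for data collection. Since \<eta> < 1/2, the posterior of the
  intended action exceeds that of any other action by (1 - 2\<eta>)/|A|; hence a model whose greedy
  decoder errs with probability \<beta> has Bhattacharyya affinity at most 1 - (1 - 2\<eta>)^2 \<beta> / (16 |A|^2)
  with the realizer, and by Markov's inequality for the square-rooted likelihood ratio it beats the
  realizer in likelihood on n samples with probability at most this affinity to the n-th power.
  A union bound over F and the H - 1 stages gives the sample size.
\<close>

section \<open>Expectations of bounded functions\<close>

lemma integrable_measure_pmf_bounded:
  fixes f :: "'b \<Rightarrow> real"
  assumes "\<And>y. y \<in> set_pmf p \<Longrightarrow> \<bar>f y\<bar> \<le> B"
  shows "integrable (measure_pmf p) f"
  by (rule measure_pmf.integrable_const_bound[where B=B]) (auto simp: AE_measure_pmf_iff assms)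

lemma expectation_bind_pmf:
  fixes f :: "'b \<Rightarrow> real"
  assumes "\<And>y. y \<in> set_pmf (bind_pmf M N) \<Longrightarrow> \<bar>f y\<bar> \<le> B"
  shows "measure_pmf.expectation (bind_pmf M N) f =
    measure_pmf.expectation M (\<lambda>x. measure_pmf.expectation (N x) f)"
proof -
  define g where "g y = max (- B) (min B (f y))" for y
  have g_bounded: "\<bar>g y\<bar> \<le> \<bar>B\<bar>" for y
    unfolding g_def by auto
  have g_eq_f: "g y = f y" if "y \<in> set_pmf (bind_pmf M N)" for y
    using assms[OF that] unfolding g_def by (auto simp: abs_le_iff)
  have "measure_pmf.expectation (bind_pmf M N) f = measure_pmf.expectation (bind_pmf M N) g"
    using g_eq_f by (intro integral_cong_AE) (auto simp: AE_measure_pmf_iff)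
  also have "\<dots> = measure_pmf.expectation M (\<lambda>x. measure_pmf.expectation (N x) g)"
    unfolding measure_pmf_bind
    by (rule integral_bind[where K="count_space UNIV" and B="\<bar>B\<bar>" and B'=1])
       (auto simp: g_bounded measurable_measure_pmf measure_pmf.emeasure_space_1
          space_subprob_algebra subprob_space_measure_pmf intro!: measure_pmf.finite_measure)
  also have "\<dots> = measure_pmf.expectation M (\<lambda>x. measure_pmf.expectation (N x) f)"
    using g_eq_f by (intro integral_cong_AE) (auto simp: AE_measure_pmf_iff intro!: integral_cong_AE, blast)
  finally show ?thesis .
qed

lemma expectation_bounds:
  fixes f :: "'b \<Rightarrow> real"
  assumes "\<And>y. y \<in> set_pmf p \<Longrightarrow> a \<le> f y \<and> f y \<le> b"
  shows "a \<le> measure_pmf.expectation p f \<and> measure_pmf.expectation p f \<le> b"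
proof -
  have f: "integrable (measure_pmf p) f"
    by (rule integrable_measure_pmf_bounded[where B="max \<bar>a\<bar> \<bar>b\<bar>"]) (use assms in force)
  have "measure_pmf.expectation p (\<lambda>_. a) \<le> measure_pmf.expectation p f"
    by (rule integral_mono_AE) (auto simp: f AE_measure_pmf_iff assms)
  moreover have "measure_pmf.expectation p f \<le> measure_pmf.expectation p (\<lambda>_. b)"
    by (rule integral_mono_AE) (auto simp: f AE_measure_pmf_iff assms)
  ultimately show ?thesis by simp
qed

lemma expectation_abs_le:
  fixes f :: "'b \<Rightarrow> real"
  assumes "\<And>y. y \<in> set_pmf p \<Longrightarrow> \<bar>f y\<bar> \<le> B"
  shows "\<bar>measure_pmf.expectation p f\<bar> \<le> B"
proof -
  have "- B \<le> measure_pmf.expectation p f \<and> measure_pmf.expectation p f \<le> B"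
  proof (rule expectation_bounds)
    fix y assume "y \<in> set_pmf p"
    then show "- B \<le> f y \<and> f y \<le> B" using assms by (simp add: abs_le_iff minus_le_iff)
  qed
  then show ?thesis by auto
qed

lemma expectation_mono_bounded:
  fixes f g :: "'b \<Rightarrow> real"
  assumes "\<And>y. y \<in> set_pmf p \<Longrightarrow> \<bar>f y\<bar> \<le> B" "\<And>y. y \<in> set_pmf p \<Longrightarrow> \<bar>g y\<bar> \<le> B"
    and "\<And>y. y \<in> set_pmf p \<Longrightarrow> f y \<le> g y"
  shows "measure_pmf.expectation p f \<le> measure_pmf.expectation p g"
  by (rule integral_mono_AE)
     (auto simp: integrable_measure_pmf_bounded[OF assms(1)] integrable_measure_pmf_bounded[OF assms(2)]
        AE_measure_pmf_iff assms(3))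

lemma expectation_add_bounded:
  fixes f g :: "'b \<Rightarrow> real"
  assumes "\<And>y. y \<in> set_pmf p \<Longrightarrow> \<bar>f y\<bar> \<le> B" "\<And>y. y \<in> set_pmf p \<Longrightarrow> \<bar>g y\<bar> \<le> B"
  shows "measure_pmf.expectation p (\<lambda>y. f y + g y) =
    measure_pmf.expectation p f + measure_pmf.expectation p g"
  by (rule Bochner_Integration.integral_add)
     (auto simp: integrable_measure_pmf_bounded[OF assms(1)] integrable_measure_pmf_bounded[OF assms(2)])

lemma expectation_diff_bounded:
  fixes f g :: "'b \<Rightarrow> real"
  assumes "\<And>y. y \<in> set_pmf p \<Longrightarrow> \<bar>f y\<bar> \<le> B" "\<And>y. y \<in> set_pmf p \<Longrightarrow> \<bar>g y\<bar> \<le> B"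
  shows "measure_pmf.expectation p (\<lambda>y. f y - g y) =
    measure_pmf.expectation p f - measure_pmf.expectation p g"
  by (rule Bochner_Integration.integral_diff)
     (auto simp: integrable_measure_pmf_bounded[OF assms(1)] integrable_measure_pmf_bounded[OF assms(2)])

lemma expectation_diff_mult_le:
  fixes f g k :: "'b \<Rightarrow> real"
  assumes "\<And>y. y \<in> set_pmf p \<Longrightarrow> \<bar>f y\<bar> \<le> B" "\<And>y. y \<in> set_pmf p \<Longrightarrow> \<bar>g y\<bar> \<le> B"
    and "\<And>y. y \<in> set_pmf p \<Longrightarrow> \<bar>k y\<bar> \<le> B"
    and "\<And>y. y \<in> set_pmf p \<Longrightarrow> g y - c * k y \<le> f y"
  shows "measure_pmf.expectation p g - c * measure_pmf.expectation p k \<le> measure_pmf.expectation p f"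
proof -
  have f: "integrable (measure_pmf p) f" and g: "integrable (measure_pmf p) g"
    and k: "integrable (measure_pmf p) k"
    by (rule integrable_measure_pmf_bounded, fact)+
  have "measure_pmf.expectation p g - c * measure_pmf.expectation p k =
      measure_pmf.expectation p (\<lambda>y. g y - c * k y)"
    using g k by simp
  also have "\<dots> \<le> measure_pmf.expectation p f"
    using f g k by (intro integral_mono_AE) (auto simp: AE_measure_pmf_iff assms(4))
  finally show ?thesis .
qed

lemma expectation_nested_diff_mult_le:
  fixes f g k :: "'b \<Rightarrow> 'c \<Rightarrow> real"
  assumes "\<And>y z. y \<in> set_pmf P \<Longrightarrow> z \<in> set_pmf (Q y) \<Longrightarrow> \<bar>f y z\<bar> \<le> B"
    and "\<And>y z. y \<in> set_pmf P \<Longrightarrow> z \<in> set_pmf (Q y) \<Longrightarrow> \<bar>g y z\<bar> \<le> B"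
    and "\<And>y z. y \<in> set_pmf P \<Longrightarrow> z \<in> set_pmf (Q y) \<Longrightarrow> \<bar>k y z\<bar> \<le> B"
    and "\<And>y z. y \<in> set_pmf P \<Longrightarrow> z \<in> set_pmf (Q y) \<Longrightarrow> g y z - c * k y z \<le> f y z"
  shows "measure_pmf.expectation P (\<lambda>y. measure_pmf.expectation (Q y) (g y))
      - c * measure_pmf.expectation P (\<lambda>y. measure_pmf.expectation (Q y) (k y))
    \<le> measure_pmf.expectation P (\<lambda>y. measure_pmf.expectation (Q y) (f y))"
  by (intro expectation_diff_mult_le[where B=B] expectation_abs_le) (use assms in auto)

lemma expectation_nested_mono:
  fixes f g :: "'b \<Rightarrow> 'c \<Rightarrow> real"
  assumes "\<And>y z. y \<in> set_pmf P \<Longrightarrow> z \<in> set_pmf (Q y) \<Longrightarrow> \<bar>f y z\<bar> \<le> B"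
    and "\<And>y z. y \<in> set_pmf P \<Longrightarrow> z \<in> set_pmf (Q y) \<Longrightarrow> \<bar>g y z\<bar> \<le> B"
    and "\<And>y z. y \<in> set_pmf P \<Longrightarrow> z \<in> set_pmf (Q y) \<Longrightarrow> f y z \<le> g y z"
  shows "measure_pmf.expectation P (\<lambda>y. measure_pmf.expectation (Q y) (f y))
    \<le> measure_pmf.expectation P (\<lambda>y. measure_pmf.expectation (Q y) (g y))"
  by (intro expectation_mono_bounded[where B=B] expectation_abs_le) (use assms in auto)

lemma expectation_nested_add:
  fixes f g :: "'b \<Rightarrow> 'c \<Rightarrow> real"
  assumes "\<And>y z. \<bar>f y z\<bar> \<le> B" "\<And>y z. \<bar>g y z\<bar> \<le> B"
  shows "measure_pmf.expectation P (\<lambda>y. measure_pmf.expectation (Q y) (\<lambda>z. f y z + g y z)) =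
    measure_pmf.expectation P (\<lambda>y. measure_pmf.expectation (Q y) (f y))
    + measure_pmf.expectation P (\<lambda>y. measure_pmf.expectation (Q y) (g y))"
proof -
  have "measure_pmf.expectation (Q y) (\<lambda>z. f y z + g y z) =
      measure_pmf.expectation (Q y) (f y) + measure_pmf.expectation (Q y) (g y)" for y
    by (rule expectation_add_bounded[where B=B]) (use assms in auto)
  then show ?thesis
    by (simp only:) (rule expectation_add_bounded[where B=B]; rule expectation_abs_le; use assms in auto)
qed

lemma prob_eq_expectation_indicator:
  "measure_pmf.prob p E = measure_pmf.expectation p (\<lambda>y. if y \<in> E then 1 else 0)"
proof -
  have "(\<lambda>y. if y \<in> E then 1 else 0 :: real) = indicator E" by (auto simp: indicator_def)
  then show ?thesis by simp
qed

section \<open>Bhattacharyya coefficient\<close>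

lemma power2_diff_le_crossed:
  fixes p r u v :: real
  assumes "v \<le> u" "p \<le> r"
  shows "(r - p)\<^sup>2 \<le> 2 * ((p - u)\<^sup>2 + (r - v)\<^sup>2)"
proof -
  have "(r - p)\<^sup>2 \<le> ((r - v) - (p - u))\<^sup>2"
    using assms by (intro power_mono) auto
  also have "\<dots> = 2 * ((p - u)\<^sup>2 + (r - v)\<^sup>2) - ((r - v) + (p - u))\<^sup>2"
    by (simp add: power2_eq_square algebra_simps)
  finally show ?thesis
    using zero_le_power2[of "(r - v) + (p - u)"] by linarith
qed

lemma bhattacharyya_eq_hellinger:
  fixes f g :: "'a \<Rightarrow> real"
  assumes "finite A" "\<forall>a\<in>A. 0 \<le> f a" "\<forall>a\<in>A. 0 \<le> g a" "sum f A = 1" "sum g A = 1"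
  shows "(\<Sum>a\<in>A. sqrt (f a * g a)) = 1 - (\<Sum>a\<in>A. (sqrt (f a) - sqrt (g a))\<^sup>2) / 2"
proof -
  have "(\<Sum>a\<in>A. (sqrt (f a) - sqrt (g a))\<^sup>2) = (\<Sum>a\<in>A. f a + g a - 2 * sqrt (f a * g a))"
    using assms by (intro sum.cong) (simp_all add: power2_eq_square algebra_simps real_sqrt_mult)
  also have "\<dots> = 2 - 2 * (\<Sum>a\<in>A. sqrt (f a * g a))"
    using assms by (simp add: sum.distrib sum_subtractf sum_distrib_left)
  finally show ?thesis by linarith
qed

lemma bhattacharyya_le_1:
  fixes f g :: "'a \<Rightarrow> real"
  assumes "finite A" "\<forall>a\<in>A. 0 \<le> f a" "\<forall>a\<in>A. 0 \<le> g a" "sum f A = 1" "sum g A = 1"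
  shows "(\<Sum>a\<in>A. sqrt (f a * g a)) \<le> 1"
  using bhattacharyya_eq_hellinger[OF assms] sum_nonneg[of A "\<lambda>a. (sqrt (f a) - sqrt (g a))\<^sup>2"]
  by simp

text \<open>The Hellinger terms at b and c alone are at least d^2 / 8.\<close>
lemma bhattacharyya_le_of_gap:
  fixes f g :: "'a \<Rightarrow> real"
  assumes fin: "finite A" and f0: "\<forall>a\<in>A. 0 \<le> f a" and g0: "\<forall>a\<in>A. 0 \<le> g a"
    and sf: "sum f A = 1" and sg: "sum g A = 1"
    and bc: "b \<in> A" "c \<in> A" "b \<noteq> c" and g_mode: "g c \<le> g b"
    and d: "0 \<le> d" "d \<le> f c - f b"
  shows "(\<Sum>a\<in>A. sqrt (f a * g a)) \<le> 1 - d\<^sup>2 / 16"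
proof -
  let ?D = "\<lambda>a. (sqrt (f a) - sqrt (g a))\<^sup>2"
  have f_le_1: "f a \<le> 1" if "a \<in> A" for a
    using member_le_sum[OF that, of f] f0 fin sf by simp
  have "d \<le> (sqrt (f c) - sqrt (f b)) * (sqrt (f c) + sqrt (f b))"
    using d f0 bc by (simp add: algebra_simps)
  also have "\<dots> \<le> (sqrt (f c) - sqrt (f b)) * 2"
  proof (rule mult_left_mono)
    show "sqrt (f c) + sqrt (f b) \<le> 2"
      using f_le_1[OF bc(1)] f_le_1[OF bc(2)] by (smt (verit) real_sqrt_le_1_iff)
  qed (use d in simp)
  finally have "(d / 2)\<^sup>2 \<le> (sqrt (f c) - sqrt (f b))\<^sup>2"
    using d by (intro power_mono) auto
  also have "\<dots> \<le> 2 * (?D b + ?D c)"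
    using power2_diff_le_crossed[of "sqrt (g c)" "sqrt (g b)" "sqrt (f b)" "sqrt (f c)"] g_mode d
    by simp
  also have "?D b + ?D c \<le> sum ?D A"
    using sum_mono2[OF fin, of "{b, c}" ?D] bc by simp
  finally have "d\<^sup>2 / 8 \<le> sum ?D A"
    by (simp add: power_divide)
  then show ?thesis
    using bhattacharyya_eq_hellinger[OF fin f0 g0 sf sg] by simp
qed

section \<open>Likelihood ratios of i.i.d. samples\<close>

lemma set_pmf_iid_subset: "zs \<in> set_pmf (iid n p) \<Longrightarrow> set zs \<subseteq> set_pmf p"
  by (induction n arbitrary: zs) (auto, blast)

lemma nn_integral_iid_prod_list:
  assumes "\<And>z. 0 \<le> \<phi> z"
  shows "(\<integral>\<^sup>+zs. ennreal (prod_list (map \<phi> zs)) \<partial>iid n p) = (\<integral>\<^sup>+z. ennreal (\<phi> z) \<partial>p) ^ n"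
proof (induction n)
  case (Suc n)
  have "0 \<le> prod_list (map \<phi> zs)" for zs
    by (rule prod_list_nonneg) (use assms in auto)
  then have "(\<integral>\<^sup>+zs. ennreal (prod_list (map \<phi> zs)) \<partial>iid (Suc n) p) =
      (\<integral>\<^sup>+z. ennreal (\<phi> z) * (\<integral>\<^sup>+zs. ennreal (prod_list (map \<phi> zs)) \<partial>iid n p) \<partial>p)"
    by (simp add: ennreal_mult'' nn_integral_cmult)
  then show ?case
    by (simp add: Suc.IH nn_integral_multc mult.commute)
qed simp

definition likelihood_ratio_root ::
  "('x \<Rightarrow> 'x \<Rightarrow> 'a pmf) \<Rightarrow> ('x \<Rightarrow> 'x \<Rightarrow> 'a pmf) \<Rightarrow> 'x \<times> 'a \<times> 'x \<Rightarrow> real" where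
  "likelihood_ratio_root f g = (\<lambda>(x, a, x'). sqrt (pmf (g x x') a / pmf (f x x') a))"

lemma prod_list_likelihood_ratio_root:
  assumes "\<forall>(x, a, x')\<in>set D. 0 < pmf (f x x') a"
  shows "prod_list (map (likelihood_ratio_root f g) D) = sqrt (likelihood g D / likelihood f D)
    \<and> 0 < likelihood f D"
  using assms
proof (induction D)
  case (Cons y D)
  obtain x a x' where y: "y = (x, a, x')" by (cases y)
  have "sqrt (pmf (g x x') a / pmf (f x x') a) * sqrt (likelihood g D / likelihood f D) =
      sqrt (pmf (g x x') a * likelihood g D / (pmf (f x x') a * likelihood f D))"
    by (simp flip: real_sqrt_mult)
  then show ?case
    using Cons by (auto simp: likelihood_def likelihood_ratio_root_def y)
qed (simp add: likelihood_def)

text \<open>Markov's inequality applied to the square root of the likelihood ratio.\<close>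
lemma emeasure_iid_likelihood_le:
  assumes pos: "\<forall>(x, a, x')\<in>set_pmf p. 0 < pmf (f x x') a"
  shows "emeasure (iid n p) {D. likelihood f D \<le> likelihood g D}
    \<le> (\<integral>\<^sup>+y. ennreal (likelihood_ratio_root f g y) \<partial>p) ^ n"
proof -
  have "emeasure (iid n p) {D. likelihood f D \<le> likelihood g D} =
      (\<integral>\<^sup>+D. indicator {D. likelihood f D \<le> likelihood g D} D \<partial>iid n p)"
    by simp
  also have "\<dots> \<le> (\<integral>\<^sup>+D. ennreal (prod_list (map (likelihood_ratio_root f g) D)) \<partial>iid n p)"
  proof (rule nn_integral_mono_AE, unfold AE_measure_pmf_iff, intro ballI)
    fix D assume "D \<in> set_pmf (iid n p)"
    then have "\<forall>(x, a, x')\<in>set D. 0 < pmf (f x x') a"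
      using set_pmf_iid_subset pos by blast
    note ratio = prod_list_likelihood_ratio_root[OF this, of g]
    show "indicator {D. likelihood f D \<le> likelihood g D} D
        \<le> ennreal (prod_list (map (likelihood_ratio_root f g) D))"
      using ratio by (auto simp: indicator_def)
  qed
  also have "\<dots> = (\<integral>\<^sup>+y. ennreal (likelihood_ratio_root f g y) \<partial>p) ^ n"
    by (rule nn_integral_iid_prod_list) (auto simp: likelihood_ratio_root_def)
  finally show ?thesis .
qed

section \<open>Decoded states and trajectories\<close>

definition actions_in :: "'a set \<Rightarrow> ('x \<Rightarrow> 'x \<Rightarrow> 'a) list \<Rightarrow> bool" where
  "actions_in A \<alpha>s \<longleftrightarrow> (\<forall>\<alpha>\<in>set \<alpha>s. \<forall>x x'. \<alpha> x x' \<in> A)"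

lemma dec_snoc:
  "length ys = n \<Longrightarrow> 1 \<le> n \<Longrightarrow> n \<le> length \<alpha>s \<Longrightarrow>
   dec Tc j s \<alpha>s (ys @ [x']) = Tc (j + n - 1) (dec Tc j s \<alpha>s ys) ((\<alpha>s ! (n - 1)) (last ys) x')"
proof (induction Tc j s \<alpha>s ys arbitrary: n rule: dec.induct)
  case (1 Tc h s \<alpha> \<alpha>s x x'' xs)
  then show ?case
    using "1.IH"[of "n - 1"] by (cases n) (auto simp: nth_Cons')
next
  case ("2_3" Tc h s \<alpha>s x)
  then show ?case by (cases \<alpha>s) auto
qed auto

lemma dec_take: "length ys \<le> Suc n \<Longrightarrow> dec Tc j s \<alpha>s ys = dec Tc j s (take n \<alpha>s) ys"
proof (induction Tc j s \<alpha>s ys arbitrary: n rule: dec.induct)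
  case (1 Tc h s \<alpha> \<alpha>s x x' xs)
  then show ?case by (cases n) auto
qed (auto simp: take_Cons')

lemma tasid_policy_take:
  "length ys \<le> h \<Longrightarrow> 1 \<le> h \<Longrightarrow>
   tasid_policy Tc sinit \<rho> \<alpha>s h ys = tasid_policy Tc sinit \<rho> (take (h - 1) \<alpha>s) h ys"
  unfolding tasid_policy_def by (subst dec_take[of ys "h - 1"]) auto

lemma tasid_policy_append:
  assumes "1 \<le> j" "j \<le> Suc (length \<alpha>s)" "length ys = j"
  shows "tasid_policy Tc sinit \<rho> (\<alpha>s @ [\<alpha>]) j ys = tasid_policy Tc sinit \<rho> \<alpha>s j ys"
  using assms tasid_policy_take[of ys j Tc sinit \<rho> "\<alpha>s @ [\<alpha>]"] tasid_policy_take[of ys j Tc sinit \<rho> \<alpha>s]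
  by simp

lemma length_of_set_pmf_roll: "(s, xs) \<in> set_pmf (roll init T q \<pi> k) \<Longrightarrow> length xs = k"
  by (induction k arbitrary: s xs) auto

lemma roll_cong:
  assumes "\<And>j ys. 1 \<le> j \<Longrightarrow> j \<le> k \<Longrightarrow> length ys = j \<Longrightarrow> \<pi> j ys = \<pi>' j ys"
  shows "roll init T q \<pi> k = roll init T q \<pi>' k"
  using assms
proof (induction k)
  case (Suc k)
  have "\<pi> (Suc k) (snd z @ [x]) = \<pi>' (Suc k) (snd z @ [x])" if "z \<in> set_pmf (roll init T q \<pi> k)" for z x
    using Suc.prems[of "Suc k" "snd z @ [x]"] length_of_set_pmf_roll[of "fst z" "snd z" init T q \<pi> k] that
    by simp
  with Suc show ?case
    by (auto simp: split_beta intro!: bind_pmf_cong)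
qed simp

lemma sample_triple_cong:
  "(\<And>j ys. 1 \<le> j \<Longrightarrow> j \<le> h - 1 \<Longrightarrow> length ys = j \<Longrightarrow> \<pi> j ys = \<pi>' j ys) \<Longrightarrow>
   sample_triple A init T q \<pi> h = sample_triple A init T q \<pi>' h"
  unfolding sample_triple_def using roll_cong[of "h - 1" \<pi> \<pi>' init T q] by simp

lemma set_pmf_sample_triple:
  assumes "y \<in> set_pmf (sample_triple A init T q \<pi> h)" "finite A" "A \<noteq> {}"
  obtains s xs x a s' x' where "y = (x, a, x')" "(s, xs) \<in> set_pmf (roll init T q \<pi> (h - 1))"
    "x \<in> set_pmf (q s)" "a \<in> A" "s' \<in> set_pmf (T h s a)" "x' \<in> set_pmf (q s')"
  using assms unfolding sample_triple_def by (force simp: set_pmf_of_set split_beta)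

lemma expectation_roll_Suc:
  fixes G :: "'s \<times> 'x list \<Rightarrow> real"
  assumes "\<And>z. \<bar>G z\<bar> \<le> B"
  shows "measure_pmf.expectation (roll init T q \<pi> (Suc k)) G =
    measure_pmf.expectation (roll init T q \<pi> k) (\<lambda>(s, xs). measure_pmf.expectation (q s) (\<lambda>x.
       measure_pmf.expectation (T (Suc k) s (\<pi> (Suc k) (xs @ [x]))) (\<lambda>s'. G (s', xs @ [x]))))"
  unfolding roll.simps
  by (subst expectation_bind_pmf[where B=B], rule assms)
     (auto simp: split_beta expectation_bind_pmf[where B=B] assms intro!: Bochner_Integration.integral_cong)

lemma expectation_sample_triple:
  fixes G :: "'x \<times> 'a \<times> 'x \<Rightarrow> real"
  assumes "\<And>y. \<bar>G y\<bar> \<le> B"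
  shows "measure_pmf.expectation (sample_triple A init T q \<pi> h) G =
    measure_pmf.expectation (roll init T q \<pi> (h - 1)) (\<lambda>(s, xs). measure_pmf.expectation (q s) (\<lambda>x.
      measure_pmf.expectation (pmf_of_set A) (\<lambda>a. measure_pmf.expectation (T h s a) (\<lambda>s'.
        measure_pmf.expectation (q s') (\<lambda>x'. G (x, a, x'))))))"
  unfolding sample_triple_def
  by (subst expectation_bind_pmf[where B=B], rule assms)
     (auto simp: split_beta expectation_bind_pmf[where B=B] assms intro!: Bochner_Integration.integral_cong)

lemma nn_integral_sample_triple_mono:
  fixes G1 G2 :: "'x \<times> 'a \<times> 'x \<Rightarrow> ennreal"
  assumes "\<And>s xs x. (s, xs) \<in> set_pmf (roll init T q \<pi> (h - 1)) \<Longrightarrow> x \<in> set_pmf (q s) \<Longrightarrow>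
    (\<integral>\<^sup>+a. \<integral>\<^sup>+s'. \<integral>\<^sup>+x'. G1 (x, a, x') \<partial>q s' \<partial>T h s a \<partial>pmf_of_set A) \<le>
    (\<integral>\<^sup>+a. \<integral>\<^sup>+s'. \<integral>\<^sup>+x'. G2 (x, a, x') \<partial>q s' \<partial>T h s a \<partial>pmf_of_set A)"
  shows "(\<integral>\<^sup>+y. G1 y \<partial>sample_triple A init T q \<pi> h) \<le> (\<integral>\<^sup>+y. G2 y \<partial>sample_triple A init T q \<pi> h)"
  unfolding sample_triple_def using assms
  by (auto simp: split_beta' AE_measure_pmf_iff intro!: nn_integral_mono_AE)

section \<open>Value of the learned policy\<close>

definition obs_value ::
  "(nat \<Rightarrow> 's \<Rightarrow> 'a \<Rightarrow> 's pmf) \<Rightarrow> (nat \<Rightarrow> 's \<Rightarrow> 'a \<Rightarrow> real) \<Rightarrow> ('s \<Rightarrow> 'x pmf) \<Rightarrow> (nat \<Rightarrow> 'x list \<Rightarrow> 'a)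
    \<Rightarrow> nat \<Rightarrow> nat \<Rightarrow> 'x list \<Rightarrow> 's \<Rightarrow> 'x \<Rightarrow> real" where
  "obs_value T R q \<pi> k h xs s x = R h s (\<pi> h (xs @ [x])) +
     measure_pmf.expectation (T h s (\<pi> h (xs @ [x]))) (vtail T R q \<pi> k (Suc h) (xs @ [x]))"

lemma vtail_0 [simp]: "vtail T R q \<pi> 0 h xs = (\<lambda>s. 0)"
  by (rule ext) simp

lemma vtail_Suc_eq_obs_value:
  "vtail T R q \<pi> (Suc k) h xs = (\<lambda>s. measure_pmf.expectation (q s) (obs_value T R q \<pi> k h xs s))"
  unfolding obs_value_def[abs_def] by (rule ext) simp

fun expected_mistakes ::
  "(nat \<Rightarrow> 's \<Rightarrow> 'a \<Rightarrow> 's pmf) \<Rightarrow> ('s \<Rightarrow> 'x pmf) \<Rightarrow> (nat \<Rightarrow> 'x list \<Rightarrow> 'a) \<Rightarrow> (nat \<Rightarrow> 'x \<Rightarrow> 'x \<Rightarrow> bool)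
    \<Rightarrow> nat \<Rightarrow> nat \<Rightarrow> 'x list \<Rightarrow> 's \<Rightarrow> 'x \<Rightarrow> real" where
  "expected_mistakes T q \<pi> mis 0 h xs s x = 0"
| "expected_mistakes T q \<pi> mis (Suc k) h xs s x =
     measure_pmf.expectation (T h s (\<pi> h (xs @ [x]))) (\<lambda>s'. measure_pmf.expectation (q s')
       (\<lambda>x'. (if mis h x x' then 1 else 0) + expected_mistakes T q \<pi> mis k (Suc h) (xs @ [x]) s' x'))"

lemma expected_mistakes_bounds:
  "0 \<le> expected_mistakes T q \<pi> mis k h xs s x \<and> expected_mistakes T q \<pi> mis k h xs s x \<le> real k"
proof (induction k arbitrary: h xs s x)
  case (Suc k)
  have "0 \<le> measure_pmf.expectation (q s')
      (\<lambda>x'. (if mis h x x' then 1 else 0) + expected_mistakes T q \<pi> mis k (Suc h) (xs @ [x]) s' x')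
    \<and> measure_pmf.expectation (q s')
      (\<lambda>x'. (if mis h x x' then 1 else 0) + expected_mistakes T q \<pi> mis k (Suc h) (xs @ [x]) s' x')
    \<le> real (Suc k)" for s'
  proof (rule expectation_bounds)
    fix x' show "0 \<le> (if mis h x x' then 1 else 0) + expected_mistakes T q \<pi> mis k (Suc h) (xs @ [x]) s' x'
      \<and> (if mis h x x' then 1 else 0) + expected_mistakes T q \<pi> mis k (Suc h) (xs @ [x]) s' x' \<le> real (Suc k)"
      using Suc.IH[of "Suc h" "xs @ [x]" s' x'] by auto
  qed
  then show ?case
    by (simp only: expected_mistakes.simps) (rule expectation_bounds, blast)
qed simp

lemma abs_expected_mistakes_le: "\<bar>expected_mistakes T q \<pi> mis k h xs s x\<bar> \<le> real k"
  using expected_mistakes_bounds[of T q \<pi> mis k h xs s x] by simp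

definition mistake_prob ::
  "'s pmf \<Rightarrow> (nat \<Rightarrow> 's \<Rightarrow> 'a \<Rightarrow> 's pmf) \<Rightarrow> ('s \<Rightarrow> 'x pmf) \<Rightarrow> (nat \<Rightarrow> 'x list \<Rightarrow> 'a)
    \<Rightarrow> (nat \<Rightarrow> 'x \<Rightarrow> 'x \<Rightarrow> bool) \<Rightarrow> nat \<Rightarrow> real" where
  "mistake_prob init T q \<pi> mis h = measure_pmf.expectation (roll init T q \<pi> (h - 1)) (\<lambda>(s, xs).
     measure_pmf.expectation (q s) (\<lambda>x. measure_pmf.expectation (T h s (\<pi> h (xs @ [x])))
       (\<lambda>s'. measure_pmf.expectation (q s') (\<lambda>x'. if mis h x x' then 1 else 0))))"

lemma expectation_expected_mistakes:
  "1 \<le> j \<Longrightarrow> measure_pmf.expectation (roll init T q \<pi> (j - 1)) (\<lambda>(s, xs).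
      measure_pmf.expectation (q s) (expected_mistakes T q \<pi> mis k j xs s))
   = (\<Sum>i<k. mistake_prob init T q \<pi> mis (j + i))"
proof (induction k arbitrary: j)
  case 0
  have "expected_mistakes T q \<pi> mis 0 j xs s = (\<lambda>_. 0)" for xs s
    by (rule ext) simp
  then show ?case by simp
next
  case (Suc k)
  define B where "B = real k + 1"
  define now where "now s xs x = measure_pmf.expectation (T j s (\<pi> j (xs @ [x])))
    (\<lambda>s'. measure_pmf.expectation (q s') (\<lambda>x'. if mis j x x' then 1 else 0 :: real))" for s xs x
  define later where "later s xs x = measure_pmf.expectation (T j s (\<pi> j (xs @ [x])))
    (\<lambda>s'. measure_pmf.expectation (q s') (expected_mistakes T q \<pi> mis k (Suc j) (xs @ [x]) s'))" for s xs x
  have bounded: "\<bar>now s xs x\<bar> \<le> B" "\<bar>later s xs x\<bar> \<le> B" for s xs x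
    unfolding now_def later_def B_def
    by (intro expectation_abs_le order.trans[OF abs_expected_mistakes_le]; simp)+
  have "expected_mistakes T q \<pi> mis (Suc k) j xs s = (\<lambda>x. now s xs x + later s xs x)" for s xs
    unfolding now_def later_def expected_mistakes.simps
    by (rule ext, rule expectation_nested_add[where B=B])
       (auto simp: B_def intro: order.trans[OF abs_expected_mistakes_le])
  then have "measure_pmf.expectation (roll init T q \<pi> (j - 1)) (\<lambda>(s, xs).
      measure_pmf.expectation (q s) (expected_mistakes T q \<pi> mis (Suc k) j xs s)) =
    measure_pmf.expectation (roll init T q \<pi> (j - 1)) (\<lambda>(s, xs). measure_pmf.expectation (q s) (now s xs))
    + measure_pmf.expectation (roll init T q \<pi> (j - 1)) (\<lambda>(s, xs). measure_pmf.expectation (q s) (later s xs))"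
    using expectation_nested_add[of "\<lambda>z. now (fst z) (snd z)" B "\<lambda>z. later (fst z) (snd z)"
        "roll init T q \<pi> (j - 1)" "\<lambda>z. q (fst z)"] bounded
    by (simp add: case_prod_beta')
  also have "measure_pmf.expectation (roll init T q \<pi> (j - 1))
      (\<lambda>(s, xs). measure_pmf.expectation (q s) (now s xs)) = mistake_prob init T q \<pi> mis j"
    unfolding mistake_prob_def now_def ..
  also have "measure_pmf.expectation (roll init T q \<pi> (j - 1))
      (\<lambda>(s, xs). measure_pmf.expectation (q s) (later s xs)) =
    measure_pmf.expectation (roll init T q \<pi> (Suc j - 1)) (\<lambda>(s, xs).
      measure_pmf.expectation (q s) (expected_mistakes T q \<pi> mis k (Suc j) xs s))"
    using expectation_roll_Suc[of "\<lambda>(s, xs). measure_pmf.expectation (q s)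
        (expected_mistakes T q \<pi> mis k (Suc j) xs s)" B init T q \<pi> "j - 1"] Suc.prems
    unfolding later_def B_def
    by (simp add: split_beta expectation_abs_le abs_expected_mistakes_le
        order.trans[OF abs_expected_mistakes_le])
  finally show ?case
    using Suc.IH[of "Suc j"] by (simp del: sum.lessThan_Suc add: sum.lessThan_Suc_shift)
qed

locale tasid_env =
  fixes H :: nat and S :: "'s set" and A :: "'a set" and sinit :: 's
    and Tc :: "nat \<Rightarrow> 's \<Rightarrow> 'a \<Rightarrow> 's" and Rc :: "nat \<Rightarrow> 's \<Rightarrow> 'a \<Rightarrow> real"
    and init :: "'s pmf" and T :: "nat \<Rightarrow> 's \<Rightarrow> 'a \<Rightarrow> 's pmf" and R :: "nat \<Rightarrow> 's \<Rightarrow> 'a \<Rightarrow> real"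
    and q :: "'s \<Rightarrow> 'x pmf" and \<rho> :: "nat \<Rightarrow> 's \<Rightarrow> 'a"
  assumes simulator: "det_simulator H S A sinit Tc Rc"
    and block: "block_mdp H S A init T R q"
    and \<rho>_actions: "\<forall>h\<in>{1..H}. \<forall>s\<in>S. \<rho> h s \<in> A"
begin

abbreviation latent_policy :: "nat \<Rightarrow> 'x list \<Rightarrow> 'a" where
  "latent_policy \<equiv> compose_decoder S q \<rho>"

abbreviation learned_policy :: "('x \<Rightarrow> 'x \<Rightarrow> 'a) list \<Rightarrow> nat \<Rightarrow> 'x list \<Rightarrow> 'a" where
  "learned_policy \<alpha>s \<equiv> tasid_policy Tc sinit \<rho> \<alpha>s"

lemma finite_S: "finite S" and finite_A: "finite A" and A_nonempty: "A \<noteq> {}"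
  and sinit_in_S: "sinit \<in> S"
  using simulator unfolding det_simulator_def by auto

lemma card_A_ge_1: "card A \<ge> 1"
  using finite_A A_nonempty by (simp add: Suc_leI card_gt_0_iff)

lemma Tc_in_S: "h \<in> {1..H} \<Longrightarrow> s \<in> S \<Longrightarrow> a \<in> A \<Longrightarrow> Tc h s a \<in> S"
  using simulator unfolding det_simulator_def by auto

lemma set_pmf_init_subset: "set_pmf init \<subseteq> S"
  using block unfolding block_mdp_def by auto

lemma set_pmf_T_subset: "h \<in> {1..H} \<Longrightarrow> s \<in> S \<Longrightarrow> a \<in> A \<Longrightarrow> set_pmf (T h s a) \<subseteq> S"
  using block unfolding block_mdp_def by auto

lemma R_bounds: "h \<in> {1..H} \<Longrightarrow> s \<in> S \<Longrightarrow> a \<in> A \<Longrightarrow> 0 \<le> R h s a \<and> R h s a \<le> 1"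
  using block unfolding block_mdp_def by auto

lemma decoder_eq:
  assumes "s \<in> S" "x \<in> set_pmf (q s)"
  shows "decoder S q x = s"
proof -
  have "\<forall>s\<in>S. \<forall>s'\<in>S. s \<noteq> s' \<longrightarrow> set_pmf (q s) \<inter> set_pmf (q s') = {}"
    using block unfolding block_mdp_def by auto
  then show ?thesis
    unfolding decoder_def by (intro the_equality) (use assms in auto)
qed

lemma dec_in_S:
  "s \<in> S \<Longrightarrow> 1 \<le> j \<Longrightarrow> j + length \<alpha>s \<le> H \<Longrightarrow> actions_in A \<alpha>s \<Longrightarrow> dec Tc j s \<alpha>s xs \<in> S"
proof (induction \<alpha>s arbitrary: j s xs)
  case (Cons \<alpha> \<alpha>s)
  show ?case
  proof (cases xs rule: remdups_adj.cases)
    case (3 x x' xs')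
    then show ?thesis
      using Cons Tc_in_S[of j s "\<alpha> x x'"] by (auto simp: actions_in_def)
  qed (use Cons.prems in auto)
qed simp

lemma learned_policy_in_A:
  "actions_in A \<alpha>s \<Longrightarrow> length \<alpha>s < H \<Longrightarrow> h \<in> {1..H} \<Longrightarrow> learned_policy \<alpha>s h ys \<in> A"
  unfolding tasid_policy_def using \<rho>_actions dec_in_S[of sinit 1 \<alpha>s ys] sinit_in_S by auto

lemma reach_subset_S: "1 \<le> h \<Longrightarrow> h \<le> H \<Longrightarrow> reach A init T h \<subseteq> S"
proof (induction h)
  case (Suc h)
  then show ?case
    using set_pmf_init_subset set_pmf_T_subset[of h] by (cases h) fastforce+
qed simp

definition admissible :: "(nat \<Rightarrow> 'x list \<Rightarrow> 'a) \<Rightarrow> bool" where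
  "admissible \<pi> \<longleftrightarrow> (\<forall>h\<in>{1..H}. \<forall>s\<in>S. \<forall>x\<in>set_pmf (q s). \<forall>ys. \<pi> h (ys @ [x]) \<in> A)"

lemma admissible_latent_policy: "admissible latent_policy"
  unfolding admissible_def compose_decoder_def using \<rho>_actions decoder_eq by auto

lemma admissible_learned_policy: "actions_in A \<alpha>s \<Longrightarrow> length \<alpha>s < H \<Longrightarrow> admissible (learned_policy \<alpha>s)"
  unfolding admissible_def using learned_policy_in_A by blast

lemma roll_in_reach:
  assumes "admissible \<pi>"
  shows "(s, xs) \<in> set_pmf (roll init T q \<pi> k) \<Longrightarrow> k < H \<Longrightarrow> s \<in> reach A init T (Suc k)"
proof (induction k arbitrary: s xs)
  case (Suc k)
  then obtain s0 xs0 x where s0: "(s0, xs0) \<in> set_pmf (roll init T q \<pi> k)" "x \<in> set_pmf (q s0)"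
    and s: "s \<in> set_pmf (T (Suc k) s0 (\<pi> (Suc k) (xs0 @ [x])))"
    by auto
  have "s0 \<in> reach A init T (Suc k)"
    using Suc s0 by simp
  moreover have "\<pi> (Suc k) (xs0 @ [x]) \<in> A"
    using assms reach_subset_S[of "Suc k"] calculation s0(2) Suc.prems(2)
    unfolding admissible_def by auto
  ultimately show ?case
    using s by auto
qed auto

lemma roll_in_S:
  "admissible \<pi> \<Longrightarrow> (s, xs) \<in> set_pmf (roll init T q \<pi> k) \<Longrightarrow> k < H \<Longrightarrow> s \<in> S"
  using roll_in_reach reach_subset_S[of "Suc k"] by auto

lemma obs_value_bounds:
  assumes "admissible \<pi>"
  shows "s \<in> S \<Longrightarrow> x \<in> set_pmf (q s) \<Longrightarrow> 1 \<le> h \<Longrightarrow> h + k \<le> H \<Longrightarrow>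
    0 \<le> obs_value T R q \<pi> k h xs s x \<and> obs_value T R q \<pi> k h xs s x \<le> real (Suc k)"
proof (induction k arbitrary: h xs s x)
  case 0
  then have "\<pi> h (xs @ [x]) \<in> A"
    using assms unfolding admissible_def by auto
  with 0 show ?case
    using R_bounds[of h s] by (simp add: obs_value_def)
next
  case (Suc k)
  have h: "h \<in> {1..H}" and a: "\<pi> h (xs @ [x]) \<in> A"
    using assms Suc.prems unfolding admissible_def by auto
  have "0 \<le> vtail T R q \<pi> (Suc k) (Suc h) (xs @ [x]) s'
      \<and> vtail T R q \<pi> (Suc k) (Suc h) (xs @ [x]) s' \<le> real (Suc k)"
    if "s' \<in> set_pmf (T h s (\<pi> h (xs @ [x])))" for s'
  proof -
    have "s' \<in> S"
      using set_pmf_T_subset[OF h Suc.prems(1) a] that by auto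
    then show ?thesis
      unfolding vtail_Suc_eq_obs_value
      by (intro expectation_bounds) (use Suc.IH Suc.prems in auto)
  qed
  then have "0 \<le> measure_pmf.expectation (T h s (\<pi> h (xs @ [x]))) (vtail T R q \<pi> (Suc k) (Suc h) (xs @ [x]))
    \<and> measure_pmf.expectation (T h s (\<pi> h (xs @ [x]))) (vtail T R q \<pi> (Suc k) (Suc h) (xs @ [x]))
      \<le> real (Suc k)"
    by (intro expectation_bounds) auto
  then show ?case
    unfolding obs_value_def using R_bounds[OF h Suc.prems(1) a] by auto
qed

lemma vtail_bounds:
  assumes "admissible \<pi>" "s \<in> S" "1 \<le> h" "h + k \<le> Suc H"
  shows "0 \<le> vtail T R q \<pi> k h xs s \<and> vtail T R q \<pi> k h xs s \<le> real k"
proof (cases k)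
  case (Suc k')
  show ?thesis
    unfolding Suc vtail_Suc_eq_obs_value
    by (intro expectation_bounds) (use obs_value_bounds[OF assms(1,2) _ assms(3)] assms(4) Suc in auto)
qed simp

definition decoding_mistake :: "nat \<Rightarrow> ('x \<Rightarrow> 'x \<Rightarrow> 'a) \<Rightarrow> 'x \<Rightarrow> 'x \<Rightarrow> bool" where
  "decoding_mistake h \<alpha> x x' \<longleftrightarrow> Tc h (decoder S q x) (\<alpha> x x') \<noteq> decoder S q x'"

abbreviation learned_mistake :: "('x \<Rightarrow> 'x \<Rightarrow> 'a) list \<Rightarrow> nat \<Rightarrow> 'x \<Rightarrow> 'x \<Rightarrow> bool" where
  "learned_mistake \<alpha>s \<equiv> \<lambda>h. decoding_mistake h (\<alpha>s ! (h - 1))"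

lemma policies_agree_at_decoded_state:
  assumes "dec Tc 1 sinit \<alpha>s (xs @ [x]) = s" "s \<in> S" "x \<in> set_pmf (q s)"
  shows "learned_policy \<alpha>s h (xs @ [x]) = \<rho> h s" "latent_policy h (xs @ [x]) = \<rho> h s"
  using assms decoder_eq by (simp_all add: tasid_policy_def compose_decoder_def)

lemma dec_snoc_eq_of_not_mistake:
  assumes "length \<alpha>s = H - 1" "1 \<le> h" "h < H" "length xs = h - 1"
    and "dec Tc 1 sinit \<alpha>s (xs @ [x]) = s" "s \<in> S" "x \<in> set_pmf (q s)"
    and "s' \<in> S" "x' \<in> set_pmf (q s')" "\<not> learned_mistake \<alpha>s h x x'"
  shows "dec Tc 1 sinit \<alpha>s ((xs @ [x]) @ [x']) = s'"
proof -
  have "dec Tc 1 sinit \<alpha>s ((xs @ [x]) @ [x']) = Tc h s ((\<alpha>s ! (h - 1)) x x')"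
    using dec_snoc[of "xs @ [x]" h \<alpha>s Tc 1 sinit x'] assms by auto
  also have "\<dots> = s'"
    using assms decoder_eq by (auto simp: decoding_mistake_def)
  finally show ?thesis .
qed

lemma obs_value_successor_bounds:
  assumes "admissible \<pi>" "h \<in> {1..H}" "s \<in> S" "a \<in> A" "h + Suc k \<le> H"
    and "s' \<in> set_pmf (T h s a)" "x' \<in> set_pmf (q s')"
  shows "0 \<le> obs_value T R q \<pi> k (Suc h) xs s' x' \<and> obs_value T R q \<pi> k (Suc h) xs s' x' \<le> real (Suc k)"
  using obs_value_bounds[OF assms(1), of s' x' "Suc h" k xs] set_pmf_T_subset[OF assms(2-4)] assms(5-7)
  by auto

text \<open>As long as every transition has been decoded correctly, the learned policy plays \<rho> at the
  true latent state, exactly like the latent policy; a decoding mistake costs at most the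
  remaining horizon k.\<close>
lemma obs_value_learned_policy_ge:
  assumes \<alpha>s: "actions_in A \<alpha>s" "length \<alpha>s = H - 1"
  shows "s \<in> S \<Longrightarrow> x \<in> set_pmf (q s) \<Longrightarrow> 1 \<le> h \<Longrightarrow> h + k \<le> H \<Longrightarrow> length xs = h - 1 \<Longrightarrow>
    dec Tc 1 sinit \<alpha>s (xs @ [x]) = s \<Longrightarrow>
    obs_value T R q latent_policy k h xs s x
      - real k * expected_mistakes T q (learned_policy \<alpha>s) (learned_mistake \<alpha>s) k h xs s x
    \<le> obs_value T R q (learned_policy \<alpha>s) k h xs s x"
proof (induction k arbitrary: h xs s x)
  case 0
  then show ?case
    using policies_agree_at_decoded_state by (simp add: obs_value_def)
next
  case (Suc k)
  let ?\<pi> = "learned_policy \<alpha>s" and ?mis = "learned_mistake \<alpha>s"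
  let ?P = "T h s (\<rho> h s)" and ?xs = "xs @ [x]"
  let ?G = "\<lambda>s' x'. (if ?mis h x x' then 1 else 0) + expected_mistakes T q ?\<pi> ?mis k (Suc h) ?xs s' x'"
  have h: "h \<in> {1..H}"
    using Suc.prems by auto
  have plays_\<rho>: "?\<pi> h ?xs = \<rho> h s" "latent_policy h ?xs = \<rho> h s"
    using policies_agree_at_decoded_state Suc.prems by simp_all
  have \<rho>: "\<rho> h s \<in> A"
    using \<rho>_actions h Suc.prems(1) by blast
  have P_S: "set_pmf ?P \<subseteq> S"
    using set_pmf_T_subset[OF h Suc.prems(1) \<rho>] .
  have adm: "admissible ?\<pi>"
    using admissible_learned_policy[OF \<alpha>s(1)] \<alpha>s(2) h by simp
  note bounds = obs_value_successor_bounds[OF adm h Suc.prems(1) \<rho> Suc.prems(4)]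
    obs_value_successor_bounds[OF admissible_latent_policy h Suc.prems(1) \<rho> Suc.prems(4)]
  have mistakes_bounds: "0 \<le> expected_mistakes T q ?\<pi> ?mis k (Suc h) ?xs s' x'
    \<and> expected_mistakes T q ?\<pi> ?mis k (Suc h) ?xs s' x' \<le> real k" for s' x'
    by (rule expected_mistakes_bounds)
  have step: "obs_value T R q latent_policy k (Suc h) ?xs s' x' - real (Suc k) * ?G s' x'
      \<le> obs_value T R q ?\<pi> k (Suc h) ?xs s' x'"
    if s': "s' \<in> set_pmf ?P" "x' \<in> set_pmf (q s')" for s' x'
  proof (cases "?mis h x x'")
    case True
    have "0 \<le> real (Suc k) * expected_mistakes T q ?\<pi> ?mis k (Suc h) ?xs s' x'"
      using mistakes_bounds[of s' x'] by simp
    with True show ?thesis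
      using bounds[OF s', of ?xs] by (simp add: ring_distribs)
  next
    case False
    then have "dec Tc 1 sinit \<alpha>s (?xs @ [x']) = s'"
      using dec_snoc_eq_of_not_mistake[OF \<alpha>s(2)] Suc.prems s' P_S by auto
    then have "obs_value T R q latent_policy k (Suc h) ?xs s' x'
        - real k * expected_mistakes T q ?\<pi> ?mis k (Suc h) ?xs s' x'
      \<le> obs_value T R q ?\<pi> k (Suc h) ?xs s' x'"
      using Suc.IH[of s' x' "Suc h" ?xs] s' P_S Suc.prems by auto
    then show ?thesis
      using False mistakes_bounds[of s' x'] by (simp add: algebra_simps)
  qed
  have "measure_pmf.expectation ?P (\<lambda>s'. measure_pmf.expectation (q s')
        (obs_value T R q latent_policy k (Suc h) ?xs s'))
      - real (Suc k) * measure_pmf.expectation ?P (\<lambda>s'. measure_pmf.expectation (q s') (?G s'))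
    \<le> measure_pmf.expectation ?P (\<lambda>s'. measure_pmf.expectation (q s')
        (obs_value T R q ?\<pi> k (Suc h) ?xs s'))"
  proof (rule expectation_nested_diff_mult_le[where B="real k + 2"])
    fix s' x' assume s': "s' \<in> set_pmf ?P" "x' \<in> set_pmf (q s')"
    show "\<bar>obs_value T R q ?\<pi> k (Suc h) ?xs s' x'\<bar> \<le> real k + 2"
      and "\<bar>obs_value T R q latent_policy k (Suc h) ?xs s' x'\<bar> \<le> real k + 2"
      using bounds[OF s', of ?xs] by simp_all
    show "\<bar>?G s' x'\<bar> \<le> real k + 2"
      using mistakes_bounds[of s' x'] by simp
  qed (rule step)
  then show ?case
    unfolding obs_value_def[of _ _ _ _ "Suc k"] vtail_Suc_eq_obs_value expected_mistakes.simps plays_\<rho>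
    by simp
qed

lemma policy_value_eq_obs_value:
  assumes "H = Suc K"
  shows "policy_value H init T R q \<pi> =
    measure_pmf.expectation init (\<lambda>s. measure_pmf.expectation (q s) (obs_value T R q \<pi> K 1 [] s))"
  unfolding policy_value_def assms vtail_Suc_eq_obs_value ..

lemma initial_obs_value_bounds:
  assumes "admissible \<pi>" "H = Suc K" "s \<in> set_pmf init" "x \<in> set_pmf (q s)"
  shows "0 \<le> obs_value T R q \<pi> K 1 [] s x \<and> obs_value T R q \<pi> K 1 [] s x \<le> real H"
  using obs_value_bounds[OF assms(1), of s x 1 K "[]"] assms set_pmf_init_subset by auto

lemma expectation_obs_value_minus_off_init:
  assumes \<pi>: "admissible \<pi>" and K: "H = Suc K"
  shows "measure_pmf.expectation init (\<lambda>s. measure_pmf.expectation (q s)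
      (\<lambda>x. obs_value T R q \<pi> K 1 [] s x - real H * (if s \<noteq> sinit then 1 else 0)))
    = policy_value H init T R q \<pi> - real H * measure_pmf.prob init {s. s \<noteq> sinit}"
proof -
  let ?miss = "\<lambda>s. if s \<noteq> sinit then 1 else 0 :: real"
  have "measure_pmf.expectation (q s) (\<lambda>x. obs_value T R q \<pi> K 1 [] s x - real H * ?miss s) =
      measure_pmf.expectation (q s) (obs_value T R q \<pi> K 1 [] s) - real H * ?miss s"
    if "s \<in> set_pmf init" for s
    using expectation_diff_bounded[where B="real H" and p="q s"
        and f="obs_value T R q \<pi> K 1 [] s" and g="\<lambda>_. real H * ?miss s"]
      initial_obs_value_bounds[OF \<pi> K that] by simp
  then have "measure_pmf.expectation init (\<lambda>s. measure_pmf.expectation (q s)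
      (\<lambda>x. obs_value T R q \<pi> K 1 [] s x - real H * ?miss s)) =
    measure_pmf.expectation init (\<lambda>s.
      measure_pmf.expectation (q s) (obs_value T R q \<pi> K 1 [] s) - real H * ?miss s)"
    by (intro integral_cong_AE) (auto simp: AE_measure_pmf_iff)
  also have "\<dots> = policy_value H init T R q \<pi> - measure_pmf.expectation init (\<lambda>s. real H * ?miss s)"
    unfolding policy_value_eq_obs_value[OF K]
  proof (rule expectation_diff_bounded[where B="real H"])
    fix s assume "s \<in> set_pmf init"
    then show "\<bar>measure_pmf.expectation (q s) (obs_value T R q \<pi> K 1 [] s)\<bar> \<le> real H"
      using initial_obs_value_bounds[OF \<pi> K] by (intro expectation_abs_le) force
  qed simp
  finally show ?thesis
    by (simp add: prob_eq_expectation_indicator)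
qed

lemma policy_value_learned_policy_ge:
  assumes \<alpha>s: "actions_in A \<alpha>s" "length \<alpha>s = H - 1" and H: "1 \<le> H"
  shows "policy_value H init T R q latent_policy - real H * measure_pmf.prob init {s. s \<noteq> sinit}
      - real (H - 1) * (\<Sum>i<H - 1. mistake_prob init T q (learned_policy \<alpha>s) (learned_mistake \<alpha>s) (Suc i))
    \<le> policy_value H init T R q (learned_policy \<alpha>s)"
proof -
  obtain K where K: "H = Suc K"
    using H by (cases H) auto
  let ?\<pi> = "learned_policy \<alpha>s" and ?mis = "learned_mistake \<alpha>s"
  let ?g = "\<lambda>s x. obs_value T R q latent_policy K 1 [] s x - real H * (if s \<noteq> sinit then 1 else 0)"
  let ?mistakes = "\<lambda>s. expected_mistakes T q ?\<pi> ?mis K 1 [] s"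
  have adm: "admissible ?\<pi>"
    using admissible_learned_policy[OF \<alpha>s(1)] \<alpha>s(2) H by simp
  note bounds = initial_obs_value_bounds[OF adm K] initial_obs_value_bounds[OF admissible_latent_policy K]
  have mistakes_bounds: "0 \<le> ?mistakes s x \<and> ?mistakes s x \<le> real K" for s x
    by (rule expected_mistakes_bounds)
  have "measure_pmf.expectation init (\<lambda>s. measure_pmf.expectation (q s) (?g s))
      - real K * measure_pmf.expectation init (\<lambda>s. measure_pmf.expectation (q s) (?mistakes s))
    \<le> measure_pmf.expectation init (\<lambda>s. measure_pmf.expectation (q s) (obs_value T R q ?\<pi> K 1 [] s))"
  proof (rule expectation_nested_diff_mult_le[where B="2 * real H"])
    fix s x assume s: "s \<in> set_pmf init" "x \<in> set_pmf (q s)"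
    show "\<bar>obs_value T R q ?\<pi> K 1 [] s x\<bar> \<le> 2 * real H" and "\<bar>?g s x\<bar> \<le> 2 * real H"
      using bounds[OF s] by auto
    show "\<bar>?mistakes s x\<bar> \<le> 2 * real H"
      using mistakes_bounds[of s x] K by simp
    show "?g s x - real K * ?mistakes s x \<le> obs_value T R q ?\<pi> K 1 [] s x"
    proof (cases "s = sinit")
      case True
      then show ?thesis
        using obs_value_learned_policy_ge[OF \<alpha>s, of s x 1 K "[]"] s set_pmf_init_subset K by auto
    next
      case False
      have "0 \<le> real K * ?mistakes s x"
        using mistakes_bounds[of s x] by simp
      with False show ?thesis
        using bounds[OF s] by simp
    qed
  qed
  moreover have "measure_pmf.expectation init (\<lambda>s. measure_pmf.expectation (q s) (?mistakes s)) =
      (\<Sum>i<H - 1. mistake_prob init T q ?\<pi> ?mis (Suc i))"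
    using expectation_expected_mistakes[of 1 init T q ?\<pi> ?mis K] K by simp
  ultimately show ?thesis
    using expectation_obs_value_minus_off_init[OF admissible_latent_policy K]
      policy_value_eq_obs_value[OF K, of ?\<pi>] K by simp
qed

definition decoding_error :: "(nat \<Rightarrow> 'x list \<Rightarrow> 'a) \<Rightarrow> nat \<Rightarrow> ('x \<Rightarrow> 'x \<Rightarrow> 'a) \<Rightarrow> real" where
  "decoding_error \<pi> h \<alpha> = measure_pmf.prob (sample_triple A init T q \<pi> h) {(x, a, x'). decoding_mistake h \<alpha> x x'}"

lemma mistake_prob_le_card_mult_prob:
  assumes "admissible \<pi>" "1 \<le> h" "h \<le> H"
  shows "mistake_prob init T q \<pi> mis h
    \<le> real (card A) * measure_pmf.prob (sample_triple A init T q \<pi> h) {(x, a, x'). mis h x x'}"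
proof -
  define M where "M s x a = measure_pmf.expectation (T h s a)
    (\<lambda>s'. measure_pmf.expectation (q s') (\<lambda>x'. if mis h x x' then 1 else 0 :: real))" for s x a
  have M_bounds: "0 \<le> M s x a \<and> M s x a \<le> 1" for s x a
    unfolding M_def by (intro expectation_bounds) auto
  have sum_M_bounds: "0 \<le> (\<Sum>a\<in>A. M s x a) \<and> (\<Sum>a\<in>A. M s x a) \<le> real (card A)" for s x
    using sum_nonneg[of A "M s x"] sum_mono[of A "M s x" "\<lambda>_. 1"] M_bounds by auto
  let ?roll = "roll init T q \<pi> (h - 1)"
  have "mistake_prob init T q \<pi> mis h =
      measure_pmf.expectation ?roll (\<lambda>z. measure_pmf.expectation (q (fst z))
        (\<lambda>x. M (fst z) x (\<pi> h (snd z @ [x]))))"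
    unfolding mistake_prob_def M_def by (simp add: case_prod_beta')
  also have "\<dots> \<le> measure_pmf.expectation ?roll (\<lambda>z. measure_pmf.expectation (q (fst z))
        (\<lambda>x. \<Sum>a\<in>A. M (fst z) x a))"
  proof (rule expectation_nested_mono[where B="real (card A)"])
    fix z x assume z: "z \<in> set_pmf ?roll" "x \<in> set_pmf (q (fst z))"
    have "fst z \<in> S"
      using roll_in_S[OF assms(1), of "fst z" "snd z" "h - 1"] z assms(2,3) by simp
    then have "\<pi> h (snd z @ [x]) \<in> A"
      using assms z(2) unfolding admissible_def by auto
    then show "M (fst z) x (\<pi> h (snd z @ [x])) \<le> (\<Sum>a\<in>A. M (fst z) x a)"
      using M_bounds finite_A by (intro member_le_sum) auto
    show "\<bar>M (fst z) x (\<pi> h (snd z @ [x]))\<bar> \<le> real (card A)"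
      using M_bounds[of "fst z" x "\<pi> h (snd z @ [x])"] card_A_ge_1 by simp
    show "\<bar>\<Sum>a\<in>A. M (fst z) x a\<bar> \<le> real (card A)"
      using sum_M_bounds by simp
  qed
  also have "\<dots> = real (card A) * measure_pmf.expectation ?roll (\<lambda>z.
      measure_pmf.expectation (q (fst z)) (\<lambda>x. measure_pmf.expectation (pmf_of_set A) (M (fst z) x)))"
    using finite_A A_nonempty card_A_ge_1 by (simp add: integral_pmf_of_set)
  also have "measure_pmf.expectation ?roll (\<lambda>z.
      measure_pmf.expectation (q (fst z)) (\<lambda>x. measure_pmf.expectation (pmf_of_set A) (M (fst z) x)))
    = measure_pmf.prob (sample_triple A init T q \<pi> h) {(x, a, x'). mis h x x'}"
    unfolding prob_eq_expectation_indicator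
    by (subst expectation_sample_triple[where B=1]) (auto simp: M_def[abs_def] case_prod_beta')
  finally show ?thesis .
qed

lemma policy_value_bounds:
  assumes "admissible \<pi>"
  shows "0 \<le> policy_value H init T R q \<pi> \<and> policy_value H init T R q \<pi> \<le> real H"
  unfolding policy_value_def
  by (intro expectation_bounds vtail_bounds[OF assms]) (use set_pmf_init_subset in auto)

lemma policy_value_learned_policy_ge_of_horizon_le:
  assumes "real H \<le> \<epsilon>" "0 < \<epsilon>" "actions_in A \<alpha>s" "length \<alpha>s = H - 1"
  shows "policy_value H init T R q latent_policy - \<epsilon> - real H * measure_pmf.prob init {s. s \<noteq> sinit}
    \<le> policy_value H init T R q (learned_policy \<alpha>s)"
proof (cases "H = 0")
  case False
  then have "admissible (learned_policy \<alpha>s)"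
    using assms by (intro admissible_learned_policy) auto
  moreover have "0 \<le> real H * measure_pmf.prob init {s. s \<noteq> sinit}"
    by simp
  ultimately show ?thesis
    using policy_value_bounds[of "learned_policy \<alpha>s"] policy_value_bounds[OF admissible_latent_policy]
      assms(1) by linarith
qed (use assms in \<open>simp add: policy_value_def\<close>)

end

section \<open>Learning the inverse dynamics\<close>

locale tasid_learning = tasid_env H S A sinit Tc Rc init T R q \<rho>
  for H :: nat and S :: "'s set" and A :: "'a set" and sinit Tc Rc init T R
    and q :: "'s \<Rightarrow> 'x pmf" and \<rho> +
  fixes \<eta> :: real and \<xi> :: "nat \<Rightarrow> 's \<Rightarrow> 'a \<Rightarrow> 'a pmf" and F :: "('x \<Rightarrow> 'x \<Rightarrow> 'a pmf) set"
    and mle :: "nat \<Rightarrow> ('x \<times> 'a \<times> 'x) list \<Rightarrow> 'x \<Rightarrow> 'x \<Rightarrow> 'a pmf" and sel :: "('a \<Rightarrow> real) \<Rightarrow> 'a"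
  assumes \<eta>_nonneg: "0 \<le> \<eta>" and \<eta>_less_half: "\<eta> < 1/2"
    and perturbation: "\<forall>h\<in>{1..H}. \<forall>s\<in>S. \<forall>a\<in>A. set_pmf (\<xi> h s a) \<subseteq> A \<and> pmf (\<xi> h s a) a \<ge> 1 - \<eta> \<and>
          (\<forall>s'. pmf (T h s a) s' = (\<Sum>a'\<in>A. (if Tc h s a' = s' then 1 else 0) * pmf (\<xi> h s a) a'))"
    and finite_F: "finite F" and F_actions: "\<forall>f\<in>F. \<forall>x x'. set_pmf (f x x') \<subseteq> A"
    and F_realizable: "realizable H S A init T q F"
    and mle_valid: "mle_oracle H F mle"
    and sel_valid: "argmax_selector A sel"
begin

definition realizes :: "nat \<Rightarrow> ('x \<Rightarrow> 'x \<Rightarrow> 'a pmf) \<Rightarrow> bool" where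
  "realizes h f \<longleftrightarrow> (\<forall>x x'.
     obs_occurs A init T q h x \<and> (\<Sum>a'\<in>A. obs_trans S T q h x a' x') > 0 \<longrightarrow>
     (\<forall>a\<in>A. pmf (f x x') a = obs_trans S T q h x a x' / (\<Sum>a'\<in>A. obs_trans S T q h x a' x')))"

lemma exists_realizer: "1 \<le> h \<Longrightarrow> h < H \<Longrightarrow> \<exists>f\<in>F. realizes h f"
  using F_realizable unfolding realizable_def realizes_def by auto

definition trans_mass :: "nat \<Rightarrow> 's \<Rightarrow> 's \<Rightarrow> real" where
  "trans_mass h s s' = (\<Sum>a\<in>A. pmf (T h s a) s')"

lemma trans_mass_bounds: "0 \<le> trans_mass h s s' \<and> trans_mass h s s' \<le> real (card A)"
  using sum_mono[of A "\<lambda>a. pmf (T h s a) s'" "\<lambda>_. 1"] unfolding trans_mass_def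
  by (simp add: sum_nonneg pmf_le_1)

lemma realizer_pmf_eq:
  assumes f: "realizes h f" and s: "s \<in> reach A init T h" "s \<in> S" "x \<in> set_pmf (q s)"
    and s': "s' \<in> S" "x' \<in> set_pmf (q s')" and mass: "trans_mass h s s' > 0" and a: "a \<in> A"
  shows "pmf (f x x') a = pmf (T h s a) s' / trans_mass h s s'"
proof -
  have obs_trans_eq: "obs_trans S T q h x a' x' = pmf (q s') x' * pmf (T h s a') s'" for a'
    unfolding obs_trans_def using decoder_eq s s' by simp
  have emission_pos: "pmf (q s') x' > 0"
    using s'(2) by (simp add: pmf_positive)
  have sum_eq: "(\<Sum>a'\<in>A. obs_trans S T q h x a' x') = pmf (q s') x' * trans_mass h s s'"
    unfolding obs_trans_eq trans_mass_def by (simp add: sum_distrib_left)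
  have "obs_occurs A init T q h x"
    unfolding obs_occurs_def using s by auto
  moreover have "(\<Sum>a'\<in>A. obs_trans S T q h x a' x') > 0"
    unfolding sum_eq using emission_pos mass by simp
  ultimately have "pmf (f x x') a = obs_trans S T q h x a x' / (\<Sum>a'\<in>A. obs_trans S T q h x a' x')"
    using f a unfolding realizes_def by blast
  then show ?thesis
    unfolding sum_eq unfolding obs_trans_eq using emission_pos by simp
qed

lemma perturbation_at:
  "h \<in> {1..H} \<Longrightarrow> s \<in> S \<Longrightarrow> a \<in> A \<Longrightarrow> set_pmf (\<xi> h s a) \<subseteq> A \<and> pmf (\<xi> h s a) a \<ge> 1 - \<eta> \<and>
     (\<forall>s'. pmf (T h s a) s' = (\<Sum>a'\<in>A. (if Tc h s a' = s' then 1 else 0) * pmf (\<xi> h s a) a'))"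
  using perturbation by blast

lemma intended_action_exists:
  assumes h: "h \<in> {1..H}" and s: "s \<in> S" and mass: "trans_mass h s s' > 0"
  obtains c where "c \<in> A" "Tc h s c = s'"
proof -
  have "\<exists>c\<in>A. Tc h s c = s'"
  proof (rule ccontr)
    assume "\<not> (\<exists>c\<in>A. Tc h s c = s')"
    then have "trans_mass h s s' = 0"
      unfolding trans_mass_def using perturbation_at[OF h s] by (intro sum.neutral) auto
    with mass show False by simp
  qed
  with that show ?thesis by blast
qed

lemma pmf_T_intended_ge:
  assumes "h \<in> {1..H}" "s \<in> S" "c \<in> A"
  shows "1 - \<eta> \<le> pmf (T h s c) (Tc h s c)"
proof -
  have "pmf (\<xi> h s c) c \<le> (\<Sum>a'\<in>A. (if Tc h s a' = Tc h s c then 1 else 0) * pmf (\<xi> h s c) a')"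
    using member_le_sum[OF assms(3), of "\<lambda>a'. (if Tc h s a' = Tc h s c then 1 else 0) * pmf (\<xi> h s c) a'"]
      finite_A by simp
  then show ?thesis
    using perturbation_at[OF assms] by simp
qed

lemma pmf_T_unintended_le:
  assumes h: "h \<in> {1..H}" and s: "s \<in> S" and b: "b \<in> A" "Tc h s b \<noteq> s'"
  shows "pmf (T h s b) s' \<le> \<eta>"
proof -
  have \<xi>: "set_pmf (\<xi> h s b) \<subseteq> A" "1 - \<eta> \<le> pmf (\<xi> h s b) b"
    using perturbation_at[OF h s b(1)] by auto
  have "pmf (T h s b) s' = (\<Sum>a'\<in>A - {b}. (if Tc h s a' = s' then 1 else 0) * pmf (\<xi> h s b) a')"
    using perturbation_at[OF h s b(1)] b by (simp add: sum.remove[OF finite_A b(1)])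
  also have "\<dots> \<le> (\<Sum>a'\<in>A - {b}. pmf (\<xi> h s b) a')"
    by (rule sum_mono) auto
  also have "\<dots> = 1 - pmf (\<xi> h s b) b"
    using sum_diff1[OF finite_A, of "pmf (\<xi> h s b)" b] sum_pmf_eq_1[OF finite_A \<xi>(1)] b by simp
  finally show ?thesis
    using \<xi> by simp
qed

lemma posterior_gap:
  assumes h: "h \<in> {1..H}" and s: "s \<in> S" and mass: "trans_mass h s s' > 0"
    and b: "b \<in> A" "Tc h s b \<noteq> s'" and c: "c \<in> A" "Tc h s c = s'"
  shows "(1 - 2 * \<eta>) / real (card A) \<le> pmf (T h s c) s' / trans_mass h s s' - pmf (T h s b) s' / trans_mass h s s'"
proof -
  have "(1 - 2 * \<eta>) / real (card A) \<le> (1 - 2 * \<eta>) / trans_mass h s s'"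
    using \<eta>_less_half mass trans_mass_bounds[of h s s'] by (intro divide_left_mono) auto
  also have "\<dots> \<le> (pmf (T h s c) s' - pmf (T h s b) s') / trans_mass h s s'"
    using pmf_T_intended_ge[OF h s c(1)] pmf_T_unintended_le[OF h s b] c(2) mass
    by (intro divide_right_mono) auto
  finally show ?thesis
    by (simp add: diff_divide_distrib)
qed

definition margin :: real where
  "margin = (1 - 2 * \<eta>) ^ 2 / (16 * real (card A) ^ 2)"

lemma margin_pos: "0 < margin"
  unfolding margin_def using \<eta>_less_half card_A_ge_1 by simp

lemma margin_le_1: "margin \<le> 1"
proof -
  have "(1 - 2 * \<eta>) ^ 2 \<le> 1"
    using \<eta>_nonneg \<eta>_less_half by (simp add: power_le_one)
  moreover have "1 \<le> real (card A) ^ 2"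
    using card_A_ge_1 by simp
  then have "1 \<le> 16 * real (card A) ^ 2"
    by simp
  ultimately show ?thesis
    unfolding margin_def by (auto simp: divide_le_eq_1)
qed

definition greedy :: "('x \<Rightarrow> 'x \<Rightarrow> 'a pmf) \<Rightarrow> 'x \<Rightarrow> 'x \<Rightarrow> 'a" where
  "greedy g = (\<lambda>x x'. sel (\<lambda>a. pmf (g x x') a))"

lemma greedy_in_A: "greedy g x x' \<in> A"
  using sel_valid unfolding argmax_selector_def greedy_def by auto

text \<open>Given the latent transition s \<rightarrow> s', the realizer's posterior over actions is
  pmf (T h s a) s' / trans_mass h s s'.\<close>
lemma transition_likelihood_ratio_root_eq:
  assumes f: "realizes h f" and s: "s \<in> reach A init T h" "s \<in> S" "x \<in> set_pmf (q s)"
    and s': "s' \<in> S" "x' \<in> set_pmf (q s')" and mass: "0 < trans_mass h s s'"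
  shows "(\<Sum>a\<in>A. pmf (T h s a) s' * sqrt (pmf (g x x') a / pmf (f x x') a))
    = trans_mass h s s' * (\<Sum>a\<in>A. sqrt (pmf (T h s a) s' / trans_mass h s s' * pmf (g x x') a))"
proof -
  define post where "post a = pmf (T h s a) s' / trans_mass h s s'" for a
  have "pmf (T h s a) s' * sqrt (pmf (g x x') a / pmf (f x x') a) = trans_mass h s s' * sqrt (post a * pmf (g x x') a)"
    if a: "a \<in> A" for a
  proof (cases "pmf (T h s a) s' = 0")
    case False
    then have "post a > 0"
      unfolding post_def using mass by (simp add: order_le_neq_trans)
    moreover have "post a * pmf (g x x') a = (post a * post a) * (pmf (g x x') a / post a)"
      using calculation by simp
    ultimately have "sqrt (post a * pmf (g x x') a) = post a * sqrt (pmf (g x x') a / post a)"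
      by (simp only: real_sqrt_mult real_sqrt_mult_self)
    then show ?thesis
      using realizer_pmf_eq[OF f s s' mass a] mass by (simp add: post_def)
  qed (simp add: post_def)
  then show ?thesis
    by (simp add: post_def sum_distrib_left)
qed

lemma transition_likelihood_ratio_root_le:
  assumes h: "1 \<le> h" "h < H" and f: "realizes h f"
    and s: "s \<in> reach A init T h" "s \<in> S" "x \<in> set_pmf (q s)"
    and s': "s' \<in> S" "x' \<in> set_pmf (q s')" and g: "set_pmf (g x x') \<subseteq> A"
  shows "(\<Sum>a\<in>A. pmf (T h s a) s' * sqrt (pmf (g x x') a / pmf (f x x') a))
    \<le> trans_mass h s s' * (1 - margin * (if Tc h s (greedy g x x') \<noteq> s' then 1 else 0))"
proof (cases "trans_mass h s s' = 0")
  case True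
  then have "pmf (T h s a) s' = 0" if "a \<in> A" for a
    using that finite_A by (simp add: trans_mass_def sum_nonneg_eq_0_iff)
  with True show ?thesis by simp
next
  case False
  then have mass: "trans_mass h s s' > 0"
    using trans_mass_bounds[of h s s'] by simp
  have h': "h \<in> {1..H}"
    using h by simp
  define post where "post a = pmf (T h s a) s' / trans_mass h s s'" for a
  define G where "G a = pmf (g x x') a" for a
  have post: "\<forall>a\<in>A. 0 \<le> post a" "sum post A = 1"
    unfolding post_def using mass by (auto simp: trans_mass_def simp flip: sum_divide_distrib)
  have G: "\<forall>a\<in>A. 0 \<le> G a" "sum G A = 1"
    unfolding G_def using sum_pmf_eq_1[OF finite_A g] by auto
  have sum_eq: "(\<Sum>a\<in>A. pmf (T h s a) s' * sqrt (pmf (g x x') a / pmf (f x x') a))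
      = trans_mass h s s' * (\<Sum>a\<in>A. sqrt (post a * G a))"
    using transition_likelihood_ratio_root_eq[OF f s s' mass, of g] by (simp add: post_def G_def)
  show ?thesis
  proof (cases "Tc h s (greedy g x x') \<noteq> s'")
    case True
    obtain c where c: "c \<in> A" "Tc h s c = s'"
      using intended_action_exists[OF h' s(2) mass] .
    have mode: "G c \<le> G (greedy g x x')"
      using sel_valid c(1) unfolding argmax_selector_def greedy_def G_def by auto
    have "(\<Sum>a\<in>A. sqrt (post a * G a)) \<le> 1 - ((1 - 2 * \<eta>) / real (card A)) ^ 2 / 16"
      using posterior_gap[OF h' s(2) mass greedy_in_A True c] \<eta>_less_half True c greedy_in_A
      by (intro bhattacharyya_le_of_gap[OF finite_A post(1) G(1) post(2) G(2) greedy_in_A c(1) _ mode])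
         (auto simp: post_def)
    also have "\<dots> = 1 - margin"
      unfolding margin_def by (simp add: power_divide)
    finally show ?thesis
      using True mass unfolding sum_eq by simp
  next
    case False
    then show ?thesis
      unfolding sum_eq using bhattacharyya_le_1[OF finite_A post(1) G(1) post(2) G(2)] mass by simp
  qed
qed

lemma nn_integral_transition_eq_sum:
  fixes G :: "'x \<times> 'a \<times> 'x \<Rightarrow> ennreal"
  assumes h: "h \<in> {1..H}" and s: "s \<in> S"
  shows "(\<integral>\<^sup>+a. \<integral>\<^sup>+s'. \<integral>\<^sup>+x'. G (x, a, x') \<partial>q s' \<partial>T h s a \<partial>pmf_of_set A) =
    (\<Sum>s'\<in>S. \<integral>\<^sup>+x'. (\<Sum>a\<in>A. ennreal (pmf (T h s a) s') * G (x, a, x')) \<partial>q s') / of_nat (card A)"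
proof -
  have support: "(\<integral>\<^sup>+s'. \<integral>\<^sup>+x'. G (x, a, x') \<partial>q s' \<partial>T h s a) =
      (\<Sum>s'\<in>S. (\<integral>\<^sup>+x'. G (x, a, x') \<partial>q s') * ennreal (pmf (T h s a) s'))" if "a \<in> A" for a
    by (rule nn_integral_measure_pmf_support[OF finite_S]) (use set_pmf_T_subset[OF h s that] in auto)
  have "(\<integral>\<^sup>+a. \<integral>\<^sup>+s'. \<integral>\<^sup>+x'. G (x, a, x') \<partial>q s' \<partial>T h s a \<partial>pmf_of_set A) =
      (\<Sum>a\<in>A. \<Sum>s'\<in>S. (\<integral>\<^sup>+x'. G (x, a, x') \<partial>q s') * ennreal (pmf (T h s a) s')) / of_nat (card A)"
    by (subst nn_integral_pmf_of_set[OF A_nonempty finite_A]) (simp add: support cong: sum.cong)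
  also have "\<dots> = (\<Sum>s'\<in>S. \<integral>\<^sup>+x'. (\<Sum>a\<in>A. ennreal (pmf (T h s a) s') * G (x, a, x')) \<partial>q s')
      / of_nat (card A)"
    by (subst sum.swap) (simp add: nn_integral_sum nn_integral_cmult nn_integral_multc mult_ac)
  finally show ?thesis .
qed

lemma nn_integral_one_minus_margin_mistake:
  "(\<integral>\<^sup>+y. ennreal (1 - margin * indicator {(x, a, x'). decoding_mistake h \<alpha> x x'} y)
      \<partial>sample_triple A init T q \<pi> h)
    = ennreal (1 - margin * decoding_error \<pi> h \<alpha>)"
proof -
  let ?D = "sample_triple A init T q \<pi> h" and ?E = "{(x, a, x'). decoding_mistake h \<alpha> x x'}"
  have "(\<integral>\<^sup>+y. ennreal (1 - margin * indicator ?E y) \<partial>?D)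
      = ennreal (measure_pmf.expectation ?D (\<lambda>y. 1 - margin * indicator ?E y))"
    using margin_le_1 margin_pos
    by (intro nn_integral_eq_integral integrable_measure_pmf_bounded[where B=2])
       (auto simp: indicator_def AE_measure_pmf_iff)
  also have "measure_pmf.expectation ?D (\<lambda>y. 1 - margin * indicator ?E y) = 1 - margin * decoding_error \<pi> h \<alpha>"
    unfolding decoding_error_def by (simp add: integrable_measure_pmf_bounded[where B=1])
  finally show ?thesis .
qed

lemma nn_integral_likelihood_ratio_root_le:
  assumes h: "1 \<le> h" "h < H" and \<pi>: "admissible \<pi>" and f: "realizes h f" and g: "g \<in> F"
  shows "(\<integral>\<^sup>+y. ennreal (likelihood_ratio_root f g y) \<partial>sample_triple A init T q \<pi> h)
    \<le> ennreal (1 - margin * decoding_error \<pi> h (greedy g))"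
  unfolding nn_integral_one_minus_margin_mistake[symmetric]
proof (rule nn_integral_sample_triple_mono)
  fix s xs x assume sx: "(s, xs) \<in> set_pmf (roll init T q \<pi> (h - 1))" "x \<in> set_pmf (q s)"
  have h': "h \<in> {1..H}"
    using h by simp
  have reach: "s \<in> reach A init T h" and s: "s \<in> S"
    using roll_in_reach[OF \<pi> sx(1)] reach_subset_S[of h] h by auto
  let ?G1 = "\<lambda>y. ennreal (likelihood_ratio_root f g y)"
  let ?G2 = "\<lambda>y. ennreal (1 - margin * indicator {(x, a, x'). decoding_mistake h (greedy g) x x'} y)"
  have "(\<Sum>a\<in>A. ennreal (pmf (T h s a) s') * ?G1 (x, a, x')) \<le> (\<Sum>a\<in>A. ennreal (pmf (T h s a) s') * ?G2 (x, a, x'))"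
    if s': "s' \<in> S" "x' \<in> set_pmf (q s')" for s' x'
  proof -
    have mistake: "decoding_mistake h (greedy g) x x' \<longleftrightarrow> Tc h s (greedy g x x') \<noteq> s'"
      using decoder_eq[OF s sx(2)] decoder_eq[OF s'] by (simp add: decoding_mistake_def)
    have "(\<Sum>a\<in>A. ennreal (pmf (T h s a) s') * ?G1 (x, a, x'))
        = ennreal (\<Sum>a\<in>A. pmf (T h s a) s' * sqrt (pmf (g x x') a / pmf (f x x') a))"
      by (simp add: likelihood_ratio_root_def ennreal_mult'' sum_ennreal flip: ennreal_mult'')
    also have "\<dots> \<le> ennreal (trans_mass h s s' * (1 - margin * (if Tc h s (greedy g x x') \<noteq> s' then 1 else 0)))"
      using transition_likelihood_ratio_root_le[OF h f reach s sx(2) s'] F_actions g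
      by (intro ennreal_leI) auto
    also have "\<dots> = (\<Sum>a\<in>A. ennreal (pmf (T h s a) s') * ?G2 (x, a, x'))"
      using margin_le_1 mistake
      by (simp add: trans_mass_def sum_distrib_right indicator_def ennreal_mult'' sum_ennreal flip: ennreal_mult'')
    finally show ?thesis .
  qed
  then show "(\<integral>\<^sup>+a. \<integral>\<^sup>+s'. \<integral>\<^sup>+x'. ?G1 (x, a, x') \<partial>q s' \<partial>T h s a \<partial>pmf_of_set A) \<le>
      (\<integral>\<^sup>+a. \<integral>\<^sup>+s'. \<integral>\<^sup>+x'. ?G2 (x, a, x') \<partial>q s' \<partial>T h s a \<partial>pmf_of_set A)"
    unfolding nn_integral_transition_eq_sum[OF h' s, where G="?G1"] nn_integral_transition_eq_sum[OF h' s, where G="?G2"]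
    by (intro divide_right_mono_ennreal sum_mono nn_integral_mono_AE) (auto simp: AE_measure_pmf_iff)
qed

lemma decoding_error_bounds: "0 \<le> decoding_error \<pi> h \<alpha> \<and> decoding_error \<pi> h \<alpha> \<le> 1"
  unfolding decoding_error_def by simp

lemma one_minus_margin_mult_bounds:
  assumes "0 \<le> p" "p \<le> 1"
  shows "0 \<le> 1 - margin * p \<and> 1 - margin * p \<le> 1"
  using assms margin_pos margin_le_1 mult_le_one[of margin p] by auto

lemma realizer_pmf_pos_on_sample:
  assumes h: "1 \<le> h" "h < H" and \<pi>: "admissible \<pi>" and f: "realizes h f"
  shows "\<forall>(x, a, x')\<in>set_pmf (sample_triple A init T q \<pi> h). 0 < pmf (f x x') a"
proof (clarify)
  fix x a x' assume "(x, a, x') \<in> set_pmf (sample_triple A init T q \<pi> h)"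
  then obtain s xs s' where sx: "(s, xs) \<in> set_pmf (roll init T q \<pi> (h - 1))" "x \<in> set_pmf (q s)"
    and a: "a \<in> A" and s': "s' \<in> set_pmf (T h s a)" "x' \<in> set_pmf (q s')"
    by (auto elim: set_pmf_sample_triple[OF _ finite_A A_nonempty])
  have reach: "s \<in> reach A init T h" and s: "s \<in> S"
    using roll_in_reach[OF \<pi> sx(1)] reach_subset_S[of h] h by auto
  have s'_S: "s' \<in> S"
    using set_pmf_T_subset[of h s a] h s a s'(1) by auto
  have pos: "0 < pmf (T h s a) s'"
    using s'(1) by (simp add: pmf_positive)
  moreover have "pmf (T h s a) s' \<le> trans_mass h s s'"
    unfolding trans_mass_def using a finite_A by (intro member_le_sum) auto
  ultimately show "0 < pmf (f x x') a"
    using realizer_pmf_eq[OF f reach s sx(2) s'_S s'(2) _ a] by simp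
qed

lemma prob_realizer_outscored_le:
  assumes h: "1 \<le> h" "h < H" and \<pi>: "admissible \<pi>" and f: "realizes h f" and g: "g \<in> F"
  shows "measure_pmf.prob (iid n (sample_triple A init T q \<pi> h)) {D. likelihood f D \<le> likelihood g D}
    \<le> (1 - margin * decoding_error \<pi> h (greedy g)) ^ n"
proof -
  let ?p = "1 - margin * decoding_error \<pi> h (greedy g)"
  have p: "0 \<le> ?p"
    using one_minus_margin_mult_bounds decoding_error_bounds by blast
  have "emeasure (iid n (sample_triple A init T q \<pi> h)) {D. likelihood f D \<le> likelihood g D}
      \<le> (\<integral>\<^sup>+y. ennreal (likelihood_ratio_root f g y) \<partial>sample_triple A init T q \<pi> h) ^ n"
    by (rule emeasure_iid_likelihood_le[OF realizer_pmf_pos_on_sample[OF h \<pi> f]])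
  also have "\<dots> \<le> ennreal ?p ^ n"
    by (intro power_mono nn_integral_likelihood_ratio_root_le[OF h \<pi> f g]) simp
  also have "\<dots> = ennreal (?p ^ n)"
    using p by (simp add: ennreal_power)
  finally show ?thesis
    using p by (simp add: measure_pmf.emeasure_eq_measure)
qed

lemma decoding_error_greedy_realizer:
  assumes h: "1 \<le> h" "h < H" and \<pi>: "admissible \<pi>" and f: "realizes h f" "f \<in> F"
  shows "decoding_error \<pi> h (greedy f) = 0"
proof -
  let ?D = "sample_triple A init T q \<pi> h"
  have "(\<integral>\<^sup>+y. ennreal (likelihood_ratio_root f f y) \<partial>?D) = (\<integral>\<^sup>+y. 1 \<partial>?D)"
    using realizer_pmf_pos_on_sample[OF h \<pi> f(1)]
    by (intro nn_integral_cong_AE) (auto simp: AE_measure_pmf_iff likelihood_ratio_root_def)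
  then have "1 \<le> ennreal (1 - margin * decoding_error \<pi> h (greedy f))"
    using nn_integral_likelihood_ratio_root_le[OF h \<pi> f] by simp
  then have "margin * decoding_error \<pi> h (greedy f) \<le> 0"
    using ennreal_le_iff2 by fastforce
  then show ?thesis
    using margin_pos decoding_error_bounds[of \<pi> h "greedy f"] by (simp add: mult_le_0_iff)
qed

text \<open>Union bound over the hypotheses g \<in> F whose greedy decoder errs with probability above
  \<beta>: each of them beats the realizer in likelihood only with exponentially small probability.\<close>
lemma prob_decoding_error_gt_le:
  assumes h: "1 \<le> h" "h < H" and \<pi>: "admissible \<pi>" and \<beta>: "0 \<le> \<beta>" "\<beta> \<le> 1"
  shows "measure_pmf.prob (iid n (sample_triple A init T q \<pi> h))
      {D. \<beta> < decoding_error \<pi> h (greedy (mle h D))}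
    \<le> real (card F - 1) * (1 - margin * \<beta>) ^ n"
proof -
  let ?M = "iid n (sample_triple A init T q \<pi> h)"
  obtain f where f: "f \<in> F" "realizes h f"
    using exists_realizer[OF h] by blast
  define Bad where "Bad = {g\<in>F. \<beta> < decoding_error \<pi> h (greedy g)}"
  have "f \<notin> Bad"
    unfolding Bad_def using decoding_error_greedy_realizer[OF h \<pi> f(2,1)] \<beta> by auto
  then have "Bad \<subseteq> F - {f}"
    unfolding Bad_def by auto
  then have card_Bad: "card Bad \<le> card F - 1"
    using card_mono[of "F - {f}" Bad] finite_F f(1) by simp
  have each: "measure_pmf.prob ?M {D. likelihood f D \<le> likelihood g D} \<le> (1 - margin * \<beta>) ^ n"
    if g: "g \<in> Bad" for g
  proof -
    have "measure_pmf.prob ?M {D. likelihood f D \<le> likelihood g D}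
        \<le> (1 - margin * decoding_error \<pi> h (greedy g)) ^ n"
      using prob_realizer_outscored_le[OF h \<pi> f(2)] g unfolding Bad_def by blast
    also have "\<dots> \<le> (1 - margin * \<beta>) ^ n"
      using one_minus_margin_mult_bounds decoding_error_bounds g margin_pos unfolding Bad_def
      by (intro power_mono) auto
    finally show ?thesis .
  qed
  have "{D. \<beta> < decoding_error \<pi> h (greedy (mle h D))} \<subseteq> (\<Union>g\<in>Bad. {D. likelihood f D \<le> likelihood g D})"
  proof
    fix D assume "D \<in> {D. \<beta> < decoding_error \<pi> h (greedy (mle h D))}"
    moreover have "mle h D \<in> F" "likelihood f D \<le> likelihood (mle h D) D"
      using mle_valid f(1) h unfolding mle_oracle_def by auto
    ultimately show "D \<in> (\<Union>g\<in>Bad. {D. likelihood f D \<le> likelihood g D})"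
      unfolding Bad_def by blast
  qed
  then have "measure_pmf.prob ?M {D. \<beta> < decoding_error \<pi> h (greedy (mle h D))}
      \<le> (\<Sum>g\<in>Bad. measure_pmf.prob ?M {D. likelihood f D \<le> likelihood g D})"
    using finite_F unfolding Bad_def
    by (intro order.trans[OF measure_pmf.finite_measure_mono measure_pmf.finite_measure_subadditive_finite]) auto
  also have "\<dots> \<le> real (card Bad) * (1 - margin * \<beta>) ^ n"
    using sum_mono[OF each] by simp
  also have "\<dots> \<le> real (card F - 1) * (1 - margin * \<beta>) ^ n"
    using card_Bad one_minus_margin_mult_bounds[OF \<beta>] by (intro mult_right_mono) auto
  finally show ?thesis .
qed

section \<open>The stages of TASID\<close>

abbreviation stage :: "nat \<Rightarrow> nat \<Rightarrow> ('x \<Rightarrow> 'x \<Rightarrow> 'a) list pmf" where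
  "stage nD k \<equiv> tasid_stage A init T q Tc sinit \<rho> mle sel nD k"

lemma stage_Suc:
  "stage nD (Suc k) = bind_pmf (stage nD k) (\<lambda>\<alpha>s. map_pmf (\<lambda>D. \<alpha>s @ [greedy (mle (Suc k) D)])
     (iid nD (sample_triple A init T q (learned_policy \<alpha>s) (Suc k))))"
  by (simp add: greedy_def)

lemma set_pmf_stage: "\<alpha>s \<in> set_pmf (stage nD k) \<Longrightarrow> length \<alpha>s = k \<and> actions_in A \<alpha>s"
  by (induction k arbitrary: \<alpha>s) (auto simp: stage_Suc actions_in_def greedy_in_A tasid_stage.simps(1) simp del: tasid_stage.simps(2))

definition good_stages :: "real \<Rightarrow> nat \<Rightarrow> ('x \<Rightarrow> 'x \<Rightarrow> 'a) list \<Rightarrow> bool" where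
  "good_stages \<beta> k \<alpha>s \<longleftrightarrow> length \<alpha>s = k \<and> actions_in A \<alpha>s \<and>
     (\<forall>j<k. decoding_error (learned_policy \<alpha>s) (Suc j) (\<alpha>s ! j) \<le> \<beta>)"

lemma decoding_error_learned_policy_append:
  assumes "j \<le> length \<alpha>s"
  shows "decoding_error (learned_policy (\<alpha>s @ [\<alpha>])) (Suc j) \<alpha>' = decoding_error (learned_policy \<alpha>s) (Suc j) \<alpha>'"
proof -
  have "sample_triple A init T q (learned_policy (\<alpha>s @ [\<alpha>])) (Suc j) =
      sample_triple A init T q (learned_policy \<alpha>s) (Suc j)"
    using assms by (intro sample_triple_cong tasid_policy_append) auto
  then show ?thesis
    unfolding decoding_error_def by simp
qed

lemma good_stages_append:
  assumes good: "good_stages \<beta> k \<alpha>s" and err: "decoding_error (learned_policy \<alpha>s) (Suc k) \<alpha> \<le> \<beta>"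
    and \<alpha>: "\<forall>x x'. \<alpha> x x' \<in> A"
  shows "good_stages \<beta> (Suc k) (\<alpha>s @ [\<alpha>])"
proof -
  have "decoding_error (learned_policy (\<alpha>s @ [\<alpha>])) (Suc j) ((\<alpha>s @ [\<alpha>]) ! j) \<le> \<beta>" if "j < Suc k" for j
    using good err that decoding_error_learned_policy_append[of j \<alpha>s \<alpha>]
    by (cases "j < k") (auto simp: good_stages_def nth_append dest: less_antisym)
  then show ?thesis
    using good \<alpha> by (auto simp: good_stages_def actions_in_def)
qed

lemma prob_good_stages_Suc_ge:
  assumes k: "Suc k < H" and \<beta>: "0 \<le> \<beta>" "\<beta> \<le> 1"
  shows "(if good_stages \<beta> k \<alpha>s then 1 else 0) - real (card F - 1) * (1 - margin * \<beta>) ^ nD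
    \<le> measure_pmf.prob (iid nD (sample_triple A init T q (learned_policy \<alpha>s) (Suc k)))
        {D. good_stages \<beta> (Suc k) (\<alpha>s @ [greedy (mle (Suc k) D)])}"
proof (cases "good_stages \<beta> k \<alpha>s")
  case good: True
  let ?M = "iid nD (sample_triple A init T q (learned_policy \<alpha>s) (Suc k))"
  let ?bad = "{D. \<beta> < decoding_error (learned_policy \<alpha>s) (Suc k) (greedy (mle (Suc k) D))}"
  have "admissible (learned_policy \<alpha>s)"
    using good k by (intro admissible_learned_policy) (auto simp: good_stages_def)
  then have "measure_pmf.prob ?M ?bad \<le> real (card F - 1) * (1 - margin * \<beta>) ^ nD"
    using k \<beta> by (intro prob_decoding_error_gt_le) auto
  moreover have "space (measure_pmf ?M) - ?bad \<subseteq> {D. good_stages \<beta> (Suc k) (\<alpha>s @ [greedy (mle (Suc k) D)])}"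
    using good_stages_append[OF good] greedy_in_A by auto
  then have "1 - measure_pmf.prob ?M ?bad
      \<le> measure_pmf.prob ?M {D. good_stages \<beta> (Suc k) (\<alpha>s @ [greedy (mle (Suc k) D)])}"
    using measure_pmf.finite_measure_mono measure_pmf.prob_compl by (metis sets_measure_pmf UNIV_I)
  ultimately show ?thesis
    using good by simp
next
  case False
  have "0 \<le> real (card F - 1) * (1 - margin * \<beta>) ^ nD"
    using one_minus_margin_mult_bounds[OF \<beta>] by simp
  with False show ?thesis
    by (simp add: order.trans[OF _ measure_nonneg])
qed

lemma prob_good_stages_ge:
  assumes \<beta>: "0 \<le> \<beta>" "\<beta> \<le> 1"
  shows "k < H \<Longrightarrow> 1 - real k * (real (card F - 1) * (1 - margin * \<beta>) ^ nD)
    \<le> measure_pmf.prob (stage nD k) {\<alpha>s. good_stages \<beta> k \<alpha>s}"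
proof (induction k)
  case 0
  have "{\<alpha>s. good_stages \<beta> 0 \<alpha>s} = {[]}"
    by (auto simp: good_stages_def actions_in_def)
  then show ?case by simp
next
  case (Suc k)
  let ?\<theta> = "real (card F - 1) * (1 - margin * \<beta>) ^ nD"
  let ?extend_good = "\<lambda>\<alpha>s. measure_pmf.prob (iid nD (sample_triple A init T q (learned_policy \<alpha>s) (Suc k)))
    {D. good_stages \<beta> (Suc k) (\<alpha>s @ [greedy (mle (Suc k) D)])}"
  let ?good = "\<lambda>\<alpha>s. if good_stages \<beta> k \<alpha>s then 1 else 0 :: real"
  have \<theta>: "0 \<le> ?\<theta>"
    using one_minus_margin_mult_bounds[OF \<beta>] by simp
  have step: "measure_pmf.prob (stage nD (Suc k)) {\<alpha>s. good_stages \<beta> (Suc k) \<alpha>s}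
      = measure_pmf.expectation (stage nD k) ?extend_good"
    unfolding prob_eq_expectation_indicator stage_Suc
    by (subst expectation_bind_pmf[where B=1]) simp_all
  have le: "measure_pmf.expectation (stage nD k) (\<lambda>\<alpha>s. ?good \<alpha>s - ?\<theta>)
      \<le> measure_pmf.expectation (stage nD k) ?extend_good"
  proof (rule expectation_mono_bounded[where B="1 + ?\<theta>"])
    fix \<alpha>s
    show "\<bar>?good \<alpha>s - ?\<theta>\<bar> \<le> 1 + ?\<theta>"
      using \<theta> by auto
    have "0 \<le> ?extend_good \<alpha>s" "?extend_good \<alpha>s \<le> 1"
      by (simp_all add: measure_pmf.prob_le_1)
    then show "\<bar>?extend_good \<alpha>s\<bar> \<le> 1 + ?\<theta>"
      using \<theta> by (simp only: abs_le_iff) linarith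
    show "?good \<alpha>s - ?\<theta> \<le> ?extend_good \<alpha>s"
      by (rule prob_good_stages_Suc_ge[OF Suc.prems \<beta>])
  qed
  have "1 - real (Suc k) * ?\<theta> = (1 - real k * ?\<theta>) - ?\<theta>"
    by (simp add: algebra_simps)
  also have "\<dots> \<le> measure_pmf.prob (stage nD k) {\<alpha>s. good_stages \<beta> k \<alpha>s} - ?\<theta>"
    using Suc by simp
  also have "\<dots> = measure_pmf.expectation (stage nD k) ?good - ?\<theta>"
    unfolding prob_eq_expectation_indicator by simp
  also have "\<dots> = measure_pmf.expectation (stage nD k) (\<lambda>\<alpha>s. ?good \<alpha>s - ?\<theta>)"
    using expectation_diff_bounded[where B="1 + ?\<theta>" and p="stage nD k" and f="?good" and g="\<lambda>_. ?\<theta>"] \<theta>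
    by simp
  also note le
  finally show ?case
    unfolding step .
qed

end

section \<open>Sample size\<close>

text \<open>With \<beta> = \<epsilon> / (H^2 |A|), the failure probability (|F| - 1) (1 - margin \<beta>)^n of a stage
  drops below \<delta> / H as soon as n \<ge> ln (H |F| / \<delta>) / (margin \<beta>). No samples are needed if F is a
  singleton, or if \<epsilon> \<ge> H, since all values lie in [0, H].\<close>
definition tasid_sample_size :: "nat \<Rightarrow> nat \<Rightarrow> nat \<Rightarrow> real \<Rightarrow> real \<Rightarrow> real \<Rightarrow> nat" where
  "tasid_sample_size H cA cF \<eta> \<epsilon> \<delta> = (if cF \<le> 1 \<or> \<epsilon> \<ge> real H then 0 else
     nat \<lceil>16 * real H ^ 2 * real cA ^ 3 * ln (real H * real cF / \<delta>) / (\<epsilon> * (1 - 2 * \<eta>) ^ 2)\<rceil>)"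

lemma ln_mult_bounds:
  fixes H y :: real
  assumes "1 \<le> H" "2 \<le> y"
  shows "1 / 2 \<le> ln (H * y)" and "ln (H * y) \<le> 3 * H * ln y"
proof -
  have "1 / 2 \<le> ln (2 :: real)"
    using ln2_ge_two_thirds by simp
  also have "\<dots> \<le> ln y"
    using assms by simp
  finally have y: "1 / 2 \<le> ln y" .
  have split: "ln (H * y) = ln H + ln y"
    using assms by (simp add: ln_mult)
  moreover have "0 \<le> ln H"
    using assms by simp
  ultimately show "1 / 2 \<le> ln (H * y)"
    using y by linarith
  have "ln (H * y) \<le> H + ln y"
    using split ln_le_minus_one[of H] assms by simp
  also have "\<dots> \<le> H * (2 * ln y) + H * ln y"
  proof -
    have "H * 1 \<le> H * (2 * ln y)" and "1 * ln y \<le> H * ln y"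
      using y assms by (intro mult_left_mono mult_right_mono; simp)+
    then show ?thesis by simp
  qed
  finally show "ln (H * y) \<le> 3 * H * ln y"
    by (simp add: algebra_simps)
qed

lemma tasid_sample_size_bound:
  fixes H cA cF :: nat and \<eta> \<epsilon> \<delta> :: real
  assumes \<eta>: "0 \<le> \<eta>" "\<eta> < 1/2" and \<epsilon>: "\<epsilon> > 0" and \<delta>: "0 < \<delta>" "\<delta> < 1" and cA: "cA \<ge> 1"
  shows "real ((H - 1) * tasid_sample_size H cA cF \<eta> \<epsilon> \<delta>) \<le>
    96 * real H ^ 4 * real cA ^ 3 * ln (real cF / \<delta>) / (\<epsilon> * (1 - 2 * \<eta>) ^ 2)"
proof (cases "cF \<le> 1 \<or> \<epsilon> \<ge> real H")
  case True
  have "0 \<le> ln (real cF / \<delta>)"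
    using \<delta> by (cases "cF = 0") (auto simp: field_simps)
  with True \<epsilon> \<eta> show ?thesis
    unfolding tasid_sample_size_def by simp
next
  case False
  then have cF: "2 \<le> real cF / \<delta>" and H: "1 \<le> real H"
    using \<epsilon> \<delta> by (auto simp: field_simps)
  define D where "D = \<epsilon> * (1 - 2 * \<eta>) ^ 2"
  define L where "L = ln (real H * real cF / \<delta>)"
  define x where "x = 16 * real H ^ 2 * real cA ^ 3 * L / D"
  have "D \<le> \<epsilon> * 1"
    unfolding D_def using \<epsilon> \<eta> by (intro mult_left_mono) (simp_all add: power_le_one)
  then have D: "0 < D" "D \<le> real H"
    using \<epsilon> \<eta> False by (simp add: D_def, linarith)
  have L: "L \<le> 3 * real H * ln (real cF / \<delta>)" "1 / 2 \<le> L"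
    using ln_mult_bounds[OF H cF] unfolding L_def by simp_all
  have "1 * (1 / 2) \<le> real cA ^ 3 * L"
    using cA L(2) by (intro mult_mono) simp_all
  then have "1 * 1 \<le> real H * (16 * real cA ^ 3 * L)"
    using H by (intro mult_mono) simp_all
  then have "real H * 1 \<le> real H * (real H * (16 * real cA ^ 3 * L))"
    using H by (intro mult_left_mono) simp_all
  then have "real H \<le> 16 * real H ^ 2 * real cA ^ 3 * L"
    by (simp add: power2_eq_square mult_ac)
  then have x: "1 \<le> x"
    unfolding x_def using D by (simp add: field_simps)
  have "tasid_sample_size H cA cF \<eta> \<epsilon> \<delta> = nat \<lceil>x\<rceil>"
    using False unfolding tasid_sample_size_def x_def D_def L_def by simp
  moreover have "real (nat \<lceil>x\<rceil>) \<le> 2 * x"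
    using x by linarith
  ultimately have "real ((H - 1) * tasid_sample_size H cA cF \<eta> \<epsilon> \<delta>) \<le> real H * (2 * x)"
    using x by (simp add: mult_mono)
  also have "\<dots> = 32 * real H ^ 3 * real cA ^ 3 * L / D"
    unfolding x_def by (simp add: power2_eq_square power3_eq_cube)
  also have "\<dots> \<le> 32 * real H ^ 3 * real cA ^ 3 * (3 * real H * ln (real cF / \<delta>)) / D"
    using L(1) D by (intro divide_right_mono mult_left_mono) simp_all
  also have "\<dots> = 96 * real H ^ 4 * real cA ^ 3 * ln (real cF / \<delta>) / D"
    by (simp add: power_Suc2[of "real H" 3, simplified] algebra_simps)
  finally show ?thesis
    unfolding D_def .
qed

context tasid_learning
begin

lemma policy_value_ge_of_good_stages:
  assumes good: "good_stages \<beta> (H - 1) \<alpha>s" and H: "1 \<le> H"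
  shows "policy_value H init T R q latent_policy - real H * measure_pmf.prob init {s. s \<noteq> sinit}
      - real (H - 1) ^ 2 * real (card A) * \<beta>
    \<le> policy_value H init T R q (learned_policy \<alpha>s)"
proof -
  have \<alpha>s: "actions_in A \<alpha>s" "length \<alpha>s = H - 1"
    using good unfolding good_stages_def by auto
  have "mistake_prob init T q (learned_policy \<alpha>s) (learned_mistake \<alpha>s) (Suc i) \<le> real (card A) * \<beta>"
    if i: "i \<in> {..<H - 1}" for i
  proof -
    have "mistake_prob init T q (learned_policy \<alpha>s) (learned_mistake \<alpha>s) (Suc i)
        \<le> real (card A) * decoding_error (learned_policy \<alpha>s) (Suc i) (\<alpha>s ! i)"
      using mistake_prob_le_card_mult_prob[OF admissible_learned_policy[OF \<alpha>s(1)],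
          where h="Suc i" and mis="learned_mistake \<alpha>s"] \<alpha>s(2) i
      unfolding decoding_error_def by simp
    also have "\<dots> \<le> real (card A) * \<beta>"
      using good i unfolding good_stages_def by (intro mult_left_mono) auto
    finally show ?thesis .
  qed
  then have "(\<Sum>i<H - 1. mistake_prob init T q (learned_policy \<alpha>s) (learned_mistake \<alpha>s) (Suc i))
      \<le> (\<Sum>i<H - 1. real (card A) * \<beta>)"
    by (rule sum_mono)
  then have "real (H - 1) * (\<Sum>i<H - 1. mistake_prob init T q (learned_policy \<alpha>s) (learned_mistake \<alpha>s) (Suc i))
      \<le> real (H - 1) * (real (H - 1) * (real (card A) * \<beta>))"
    by (intro mult_left_mono) simp_all
  then show ?thesis
    using policy_value_learned_policy_ge[OF \<alpha>s H] by (simp add: power2_eq_square mult_ac)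
qed

lemma tolerance_bounds:
  assumes "0 < \<epsilon>" "\<epsilon> < real H"
  shows "0 \<le> \<epsilon> / (real H ^ 2 * real (card A)) \<and> \<epsilon> / (real H ^ 2 * real (card A)) \<le> 1"
proof -
  have "1 * 1 \<le> real H * real (card A)"
    using assms card_A_ge_1 by (intro mult_mono) auto
  then have "real H * 1 \<le> real H * (real H * real (card A))"
    by (intro mult_left_mono) auto
  then have "real H \<le> real H ^ 2 * real (card A)"
    by (simp add: power2_eq_square mult.assoc)
  then show ?thesis
    using assms by (auto simp: divide_le_eq_1)
qed

lemma tolerance_loss_le:
  assumes "0 < \<epsilon>" "1 \<le> H"
  shows "real (H - 1) ^ 2 * real (card A) * (\<epsilon> / (real H ^ 2 * real (card A))) \<le> \<epsilon>"
proof -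
  have "real (H - 1) ^ 2 * real (card A) * (\<epsilon> / (real H ^ 2 * real (card A)))
      = (real (H - 1) / real H) ^ 2 * \<epsilon>"
    using card_A_ge_1 assms by (simp add: field_simps)
  also have "\<dots> \<le> 1 * \<epsilon>"
    using assms by (intro mult_right_mono) (simp_all add: power_le_one)
  finally show ?thesis
    by simp
qed

lemma tasid_failure_le:
  assumes \<epsilon>: "0 < \<epsilon>" "\<epsilon> < real H" and \<delta>: "0 < \<delta>"
  defines "\<beta> \<equiv> \<epsilon> / (real H ^ 2 * real (card A))"
  shows "real (H - 1) * (real (card F - 1) * (1 - margin * \<beta>) ^ tasid_sample_size H (card A) (card F) \<eta> \<epsilon> \<delta>)
    \<le> \<delta>"
proof (cases "card F \<le> 1")
  case False
  define n where "n = tasid_sample_size H (card A) (card F) \<eta> \<epsilon> \<delta>"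
  define L where "L = ln (real H * real (card F) / \<delta>)"
  define x where "x = 16 * real H ^ 2 * real (card A) ^ 3 * L / (\<epsilon> * (1 - 2 * \<eta>) ^ 2)"
  have H: "1 \<le> real H"
    using \<epsilon> by simp
  have mass: "0 < real H * real (card F) / \<delta>"
    using H False \<delta> by simp
  have n: "x \<le> real n"
    using False \<epsilon> real_nat_ceiling_ge unfolding n_def tasid_sample_size_def x_def L_def by simp
  define P where "P = (1 - 2 * \<eta>) ^ 2"
  have "0 < P"
    unfolding P_def using \<eta>_less_half by simp
  moreover have "0 < real H" "0 < real (card A)"
    using H card_A_ge_1 by auto
  ultimately have "margin * \<beta> * x = L"
    using \<epsilon>(1) unfolding margin_def \<beta>_def x_def P_def[symmetric]
    by (simp add: field_simps power2_eq_square power3_eq_cube)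
  have \<beta>: "0 \<le> \<beta>" "\<beta> \<le> 1"
    using tolerance_bounds[OF \<epsilon>] unfolding \<beta>_def by auto
  then have m\<beta>: "0 \<le> margin * \<beta>" "margin * \<beta> \<le> 1"
    using margin_pos margin_le_1 mult_le_one[of margin \<beta>] by auto
  have "(1 - margin * \<beta>) ^ n \<le> exp (- (margin * \<beta>)) ^ n"
    using exp_ge_add_one_self[of "- (margin * \<beta>)"] m\<beta> by (intro power_mono) simp_all
  also have "\<dots> = exp (- (margin * \<beta>) * real n)"
    by (simp add: exp_of_nat_mult[symmetric] mult.commute)
  also have "\<dots> \<le> exp (- (margin * \<beta>) * x)"
    using n m\<beta> by (simp add: mult_left_mono)
  also have "\<dots> = exp (- L)"
    using \<open>margin * \<beta> * x = L\<close> by (simp add: mult.assoc)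
  also have "\<dots> = \<delta> / (real H * real (card F))"
    using mass unfolding L_def by (simp add: exp_minus)
  finally have power_le: "(1 - margin * \<beta>) ^ n \<le> \<delta> / (real H * real (card F))" .
  have "real (card F - 1) * (1 - margin * \<beta>) ^ n \<le> real (card F) * (\<delta> / (real H * real (card F)))"
    using power_le m\<beta> \<delta> by (intro mult_mono) simp_all
  also have "\<dots> = \<delta> / real H"
    using False by simp
  finally have "real (H - 1) * (real (card F - 1) * (1 - margin * \<beta>) ^ n) \<le> real H * (\<delta> / real H)"
    using \<delta> H m\<beta> by (intro mult_mono) simp_all
  then show ?thesis
    using H unfolding n_def by simp
qed (use \<delta> in simp)

lemma prob_tasid_value_ge:
  assumes \<epsilon>: "0 < \<epsilon>" and \<delta>: "0 < \<delta>" "\<delta> < 1"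
  shows "1 - \<delta> \<le> measure_pmf.prob (tasid H A init T q Tc sinit \<rho> mle sel (tasid_sample_size H (card A) (card F) \<eta> \<epsilon> \<delta>))
    {\<pi>. policy_value H init T R q \<pi>
          \<ge> policy_value H init T R q latent_policy - \<epsilon> - real H * measure_pmf.prob init {s. s \<noteq> sinit}}"
    (is "_ \<le> measure_pmf.prob _ ?good_value")
proof -
  define n where "n = tasid_sample_size H (card A) (card F) \<eta> \<epsilon> \<delta>"
  have tasid_eq: "measure_pmf.prob (tasid H A init T q Tc sinit \<rho> mle sel n) ?good_value =
      measure_pmf.prob (stage n (H - 1)) {\<alpha>s. learned_policy \<alpha>s \<in> ?good_value}"
    unfolding tasid_def by (simp add: vimage_def)
  show ?thesis
  proof (cases "real H \<le> \<epsilon>")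
    case True
    have "learned_policy \<alpha>s \<in> ?good_value" if "\<alpha>s \<in> set_pmf (stage n (H - 1))" for \<alpha>s
      using policy_value_learned_policy_ge_of_horizon_le[OF True \<epsilon>] set_pmf_stage[OF that] by simp
    then have "measure_pmf.prob (stage n (H - 1)) {\<alpha>s. learned_policy \<alpha>s \<in> ?good_value} = 1"
      by (subst measure_pmf.prob_eq_1) (auto simp: AE_measure_pmf_iff)
    then show ?thesis
      using tasid_eq \<delta> unfolding n_def by simp
  next
    case False
    define \<beta> where "\<beta> = \<epsilon> / (real H ^ 2 * real (card A))"
    have H: "1 \<le> H"
      using False \<epsilon> by simp
    have \<beta>: "0 \<le> \<beta>" "\<beta> \<le> 1"
      using tolerance_bounds[OF \<epsilon>] False unfolding \<beta>_def by auto
    have loss: "real (H - 1) ^ 2 * real (card A) * \<beta> \<le> \<epsilon>"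
      using tolerance_loss_le[OF \<epsilon> H] unfolding \<beta>_def .
    have "{\<alpha>s. good_stages \<beta> (H - 1) \<alpha>s} \<subseteq> {\<alpha>s. learned_policy \<alpha>s \<in> ?good_value}"
      using policy_value_ge_of_good_stages[OF _ H] loss by fastforce
    then have "measure_pmf.prob (stage n (H - 1)) {\<alpha>s. good_stages \<beta> (H - 1) \<alpha>s}
        \<le> measure_pmf.prob (stage n (H - 1)) {\<alpha>s. learned_policy \<alpha>s \<in> ?good_value}"
      by (rule measure_pmf.finite_measure_mono) simp
    moreover have "1 - real (H - 1) * (real (card F - 1) * (1 - margin * \<beta>) ^ n)
        \<le> measure_pmf.prob (stage n (H - 1)) {\<alpha>s. good_stages \<beta> (H - 1) \<alpha>s}"
      using H by (intro prob_good_stages_ge[OF \<beta>]) simp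
    moreover have "real (H - 1) * (real (card F - 1) * (1 - margin * \<beta>) ^ n) \<le> \<delta>"
      using tasid_failure_le[OF \<epsilon> _ \<delta>(1)] False unfolding n_def \<beta>_def by simp
    ultimately show ?thesis
      using tasid_eq unfolding n_def by linarith
  qed
qed

end

lemma tasid_episodes_bound:
  assumes "det_simulator H S A sinit Tc Rc" "0 \<le> \<eta>" "\<eta> < 1/2" "\<epsilon> > 0" "0 < \<delta>" "\<delta> < 1"
  shows "real ((H - 1) * tasid_sample_size H (card A) (card F) \<eta> \<epsilon> \<delta>)
    \<le> 96 * real H ^ 4 * real (card A) ^ 3 * ln (real (card F) / \<delta>) / (\<epsilon> * (1 - 2 * \<eta>) ^ 2)"
proof (rule tasid_sample_size_bound)
  show "1 \<le> card A"
    using assms(1) unfolding det_simulator_def by (simp add: Suc_leI card_gt_0_iff)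
qed (use assms in auto)

lemma tasid_value_guarantee:
  assumes sim: "det_simulator H S A sinit Tc Rc" and block: "block_mdp H S A init T R q"
    and \<eta>: "0 \<le> \<eta>" "\<eta> < 1/2" and perturbed: "eta_perturbation H S A Tc Rc T R \<eta>"
    and \<epsilon>0: "measure_pmf.prob init {s. s \<noteq> sinit} = \<epsilon>0"
    and F: "finite F" "\<forall>f\<in>F. \<forall>x x'. set_pmf (f x x') \<subseteq> A" "realizable H S A init T q F"
    and \<epsilon>: "\<epsilon> > 0" and \<delta>: "0 < \<delta>" "\<delta> < 1"
    and \<rho>: "rdp_output H S A Tc Rc \<eta> \<rho>" and mle: "mle_oracle H F mle" and sel: "argmax_selector A sel"
  shows "1 - \<delta> \<le> measure_pmf.prob (tasid H A init T q Tc sinit \<rho> mle sel (tasid_sample_size H (card A) (card F) \<eta> \<epsilon> \<delta>))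
    {\<pi>. policy_value H init T R q \<pi>
          \<ge> policy_value H init T R q (compose_decoder S q \<rho>) - \<epsilon> - real H * \<epsilon>0}"
proof -
  obtain \<xi> where \<xi>: "\<forall>h\<in>{1..H}. \<forall>s\<in>S. \<forall>a\<in>A. set_pmf (\<xi> h s a) \<subseteq> A \<and> pmf (\<xi> h s a) a \<ge> 1 - \<eta> \<and>
      (\<forall>s'. pmf (T h s a) s' = (\<Sum>a'\<in>A. (if Tc h s a' = s' then 1 else 0) * pmf (\<xi> h s a) a'))"
    using perturbed unfolding eta_perturbation_def by blast
  interpret tasid_learning H S A sinit Tc Rc init T R q \<rho> \<eta> \<xi> F mle sel
    using sim block \<eta> \<xi> F mle sel \<rho> by unfold_locales (auto simp: rdp_output_def)
  show ?thesis
    using prob_tasid_value_ge[OF \<epsilon> \<delta>] \<epsilon>0 by simp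
qed

theorem theorem3:
  "\<exists>C :: real. C > 0 \<and>
   (\<exists>nD :: nat \<Rightarrow> nat \<Rightarrow> nat \<Rightarrow> real \<Rightarrow> real \<Rightarrow> real \<Rightarrow> nat.
    \<forall>(H :: nat) (S :: 's set) (A :: 'a set) (sinit :: 's) Tc Rc (init :: 's pmf) T R
      (q :: 's \<Rightarrow> 'x pmf) (\<eta> :: real) (\<epsilon>0 :: real) (F :: ('x \<Rightarrow> 'x \<Rightarrow> 'a pmf) set) (\<epsilon> :: real) (\<delta> :: real).
      det_simulator H S A sinit Tc Rc \<and>
      block_mdp H S A init T R q \<and>
      0 \<le> \<eta> \<and> \<eta> < 1/2 \<and> eta_perturbation H S A Tc Rc T R \<eta> \<and>
      measure_pmf.prob init {s. s \<noteq> sinit} = \<epsilon>0 \<and>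
      finite F \<and> (\<forall>f\<in>F. \<forall>x x'. set_pmf (f x x') \<subseteq> A) \<and>
      realizable H S A init T q F \<and>
      \<epsilon> > 0 \<and> 0 < \<delta> \<and> \<delta> < 1
      \<longrightarrow>
      real ((H - 1) * nD H (card A) (card F) \<eta> \<epsilon> \<delta>)
        \<le> C * real H ^ 4 * real (card A) ^ 3 * ln (real (card F) / \<delta>) / (\<epsilon> * (1 - 2 * \<eta>) ^ 2) \<and>
      (\<forall>\<rho> oracle sel.
         rdp_output H S A Tc Rc \<eta> \<rho> \<and> mle_oracle H F oracle \<and> argmax_selector A sel \<longrightarrow>
         measure_pmf.prob (tasid H A init T q Tc sinit \<rho> oracle sel (nD H (card A) (card F) \<eta> \<epsilon> \<delta>))
           {\<pi>. policy_value H init T R q \<pi>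
                 \<ge> policy_value H init T R q (compose_decoder S q \<rho>) - \<epsilon> - real H * \<epsilon>0}
           \<ge> 1 - \<delta>))"
proof (intro exI[of _ 96] conjI exI[of _ tasid_sample_size] allI impI; (elim conjE)?)
  show "(0 :: real) < 96"
    by simp
qed (rule tasid_episodes_bound tasid_value_guarantee; assumption)+

end
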